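(* Let $\mathbb A=(A_n)_{n\in\mathbb N}$ be a sequence of invertible linear operators on $\mathbb R^d$ and $\mathcal S=\{\|\cdot\|_n;\ n\in\mathbb N\}$ a sequence of norms on $\mathbb R^d$ such that there exist $K,a>0$ with $\|\mathcal A(m,n)x\|_m\le K(m/n)^a\|x\|_n$ and $\|\mathcal A(n,m)x\|_n\le K(m/n)^a\|x\|_m$ for all $m\ge n$ and $x$. Let $\mathbb B=(B_n)_{n\in\mathbb Z^+}$ with $B_n=\mathcal A(2^{n+1},2^n)$ and $\tilde{\mathcal S}=\{\|\cdot\|_{2^n};\ n\in\mathbb Z^+\}$. Then there exist $1\le r\le d$ and $a_1\le b_1<\dots<a_r\le b_r$ such that $$\Sigma_{ED,\mathbb B,\tilde{\mathcal S}}=\bigcup_{i=1}^r[a_i,b_i]\quad\text{and}\quad\Sigma_{PD,\mathbb A,\mathcal S}=\bigcup_{i=1}^r\Big[\frac{\log a_i}{\log2},\frac{\log b_i}{\log2}\Big].$$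
   Context: $\mathbb N=\{1,2,\dots\}$, $\mathbb Z^+=\{0,1,\dots\}$. For invertible $(C_n)$, $\mathcal C(m,n)=C_{m-1}\cdots C_n$ ($m>n$), $\mathrm{Id}$ ($m=n$), $C_m^{-1}\cdots C_{n-1}^{-1}$ ($m<n$). Strong polynomial dichotomy of $(C_n)_{n\in\mathbb N}$ w.r.t. $\{\|\cdot\|_n\}$: there exist $K>0$, $a\ge\lambda>0$, projections $P_n$ with $C_nP_n=P_{n+1}C_n$ and, for $m\ge n$, $x$, $Q_m=\mathrm{Id}-P_m$: $\|\mathcal C(m,n)P_nx\|_m\le K(m/n)^{-\lambda}\|x\|_n$, $\|\mathcal C(n,m)Q_mx\|_n\le K(m/n)^{-\lambda}\|x\|_m$, $\|\mathcal C(m,n)x\|_m\le K(m/n)^a\|x\|_n$, $\|\mathcal C(n,m)x\|_n\le K(m/n)^a\|x\|_m$. Strong exponential dichotomy of $(C_n)_{n\in\mathbb Z^+}$ w.r.t. $\{|\cdot|_n\}$: same with $(m/n)^{-\lambda}$ replaced by $e^{-\lambda(m-n)}$ and $(m/n)^a$ by $e^{a(m-n)}$. $\Sigma_{PD,\mathbb A,\mathcal S}$: set of $\tau\in\mathbb R$ such that $(((n+1)/n)^{-\tau}A_n)_{n\in\mathbb N}$ does not admit a strong polynomial dichotomy w.r.t. $\mathcal S$. $\Sigma_{ED,\mathbb B,\tilde{\mathcal S}}$: set of $\tau>0$ such that $(\tau^{-1}B_n)_{n\in\mathbb Z^+}$ does not admit a strong exponential dichotomy w.r.t. $\tilde{\mathcal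 S}$. *)

theory Defs
  imports "HOL-Analysis.Analysis"
begin

type_synonym 'n mat = "real ^ 'n ^ 'n"

definition is_norm :: "(real ^ 'n \<Rightarrow> real) \<Rightarrow> bool" where
  "is_norm N \<longleftrightarrow> (\<forall>x. N x \<ge> 0) \<and> (\<forall>x. N x = 0 \<longleftrightarrow> x = 0)
     \<and> (\<forall>c x. N (c *\<^sub>R x) = \<bar>c\<bar> * N x) \<and> (\<forall>x y. N (x + y) \<le> N x + N y)"

fun fwd :: "(nat \<Rightarrow> 'n::finite mat) \<Rightarrow> nat \<Rightarrow> nat \<Rightarrow> 'n mat" where
  "fwd C n 0 = mat 1"
| "fwd C n (Suc k) = C (n + k) ** fwd C n k"

definition cocycle :: "(nat \<Rightarrow> 'n::finite mat) \<Rightarrow> nat \<Rightarrow> nat \<Rightarrow> 'n mat" where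
  "cocycle C m n = (if n \<le> m then fwd C n (m - n) else matrix_inv (fwd C m (n - m)))"

definition strong_poly_dich :: "(nat \<Rightarrow> 'n::finite mat) \<Rightarrow> (nat \<Rightarrow> real ^ 'n \<Rightarrow> real) \<Rightarrow> bool" where
  "strong_poly_dich C N \<longleftrightarrow>
    (\<exists>K a lam P. K > 0 \<and> lam > 0 \<and> a \<ge> lam \<and>
      (\<forall>n\<ge>1. P n ** P n = P n \<and> C n ** P n = P (n+1) ** C n) \<and>
      (\<forall>m n x. 1 \<le> n \<longrightarrow> n \<le> m \<longrightarrow>
         N m ((cocycle C m n ** P n) *v x) \<le> K * (real m / real n) powr (-lam) * N n x \<and>
         N n ((cocycle C n m ** (mat 1 - P m)) *v x) \<le> K * (real m / real n) powr (-lam) * N m x \<and>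
         N m (cocycle C m n *v x) \<le> K * (real m / real n) powr a * N n x \<and>
         N n (cocycle C n m *v x) \<le> K * (real m / real n) powr a * N m x))"

definition strong_exp_dich :: "(nat \<Rightarrow> 'n::finite mat) \<Rightarrow> (nat \<Rightarrow> real ^ 'n \<Rightarrow> real) \<Rightarrow> bool" where
  "strong_exp_dich C N \<longleftrightarrow>
    (\<exists>K a lam P. K > 0 \<and> lam > 0 \<and> a \<ge> lam \<and>
      (\<forall>n. P n ** P n = P n \<and> C n ** P n = P (n+1) ** C n) \<and>
      (\<forall>m n x. n \<le> m \<longrightarrow>
         N m ((cocycle C m n ** P n) *v x) \<le> K * exp (-lam * (real m - real n)) * N n x \<and>
         N n ((cocycle C n m ** (mat 1 - P m)) *v x) \<le> K * exp (-lam * (real m - real n)) * N m x \<and>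
         N m (cocycle C m n *v x) \<le> K * exp (a * (real m - real n)) * N n x \<and>
         N n (cocycle C n m *v x) \<le> K * exp (a * (real m - real n)) * N m x))"

definition Sigma_PD :: "(nat \<Rightarrow> 'n::finite mat) \<Rightarrow> (nat \<Rightarrow> real ^ 'n \<Rightarrow> real) \<Rightarrow> real set" where
  "Sigma_PD A N = {\<tau>. \<not> strong_poly_dich (\<lambda>n. ((real n + 1) / real n) powr (-\<tau>) *\<^sub>R A n) N}"

definition Sigma_ED :: "(nat \<Rightarrow> 'n::finite mat) \<Rightarrow> (nat \<Rightarrow> real ^ 'n \<Rightarrow> real) \<Rightarrow> real set" where
  "Sigma_ED B N = {\<tau>. \<tau> > 0 \<and> \<not> strong_exp_dich (\<lambda>n. (1 / \<tau>) *\<^sub>R B n) N}"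

end

theory Submission
  imports Defs
begin

text \<open>
  Sampling the cocycle at the dyadic times 2^k turns polynomial rates into exponential ones,
  since (2^m / 2^n)^\<lambda> = e^(\<lambda> ln 2 (m - n)), while the polynomial growth bound controls the
  cocycle inside each dyadic block [2^k, 2^(k+1)]. Hence A rescaled by ((n+1)/n)^(-\<tau>) has a
  strong polynomial dichotomy iff B rescaled by 2^(-\<tau>) has a strong exponential dichotomy,
  that is, \<Sigma>_PD = log_2 \<Sigma>_ED.

  The structure of \<Sigma>_ED is that of the classical dichotomy spectrum. For \<sigma> in the resolvent the
  stable space {x. |B(m,0) x| = O(\<sigma>^m)} is the range of the dichotomy projection at time 0.
  Its dimension is nondecreasing in \<sigma>, locally constant on the open resolvent, 0 for small and
  d for large \<sigma>, and two resolvent points with the same stable dimension enclose an interval of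
  the resolvent (the two dichotomies can be spliced). So the spectrum consists of the closed gaps
  between consecutive level sets of the stable dimension, of which there are at most d.
\<close>

section \<open>Matrix inverses and cocycles\<close>

lemma matrix_inv_cancel:
  fixes A :: "real^'n^'n"
  assumes "invertible A"
  shows "A ** matrix_inv A = mat 1" "matrix_inv A ** A = mat 1"
  using someI_ex[OF assms[unfolded invertible_def]] unfolding matrix_inv_def by auto

lemma matrix_inv_unique:
  fixes A B :: "real^'n^'n"
  assumes "A ** B = mat 1" "B ** A = mat 1"
  shows "matrix_inv A = B"
proof -
  have "invertible A" using assms invertible_def by blast
  then have "matrix_inv A = matrix_inv A ** (A ** B)" using assms by simp
  also have "\<dots> = B" by (simp add: matrix_mul_assoc matrix_inv_cancel(2)[OF \<open>invertible A\<close>])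
  finally show ?thesis .
qed

lemma matrix_inv_scaleR:
  fixes A :: "real^'n^'n"
  assumes "invertible A" "c \<noteq> 0"
  shows "matrix_inv (c *\<^sub>R A) = (1/c) *\<^sub>R matrix_inv A"
  using assms matrix_inv_cancel[OF assms(1)]
  by (intro matrix_inv_unique) (simp_all add: matrix_scalar_ac scalar_matrix_assoc[symmetric])

lemma matrix_diff_rdistrib: "((A::real^'n^'m) - B) ** C = A ** C - B ** C"
  by (vector matrix_matrix_mult_def sum_subtractf left_diff_distrib)

lemma matrix_diff_ldistrib: "(C::real^'n^'m) ** (A - B) = C ** A - C ** B"
  by (vector matrix_matrix_mult_def sum_subtractf right_diff_distrib)

lemma matrix_scaleR_left: "(k *\<^sub>R (A::real^'n^'m)) ** B = k *\<^sub>R (A ** B)"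
  by (simp add: scalar_matrix_assoc)

lemma matrix_scaleR_right: "(A::real^'n^'m) ** (k *\<^sub>R B) = k *\<^sub>R (A ** B)"
  by (simp add: matrix_scalar_ac scalar_matrix_assoc)

lemma cocycle_same [simp]: "cocycle C n n = mat 1"
  by (simp add: cocycle_def)

lemma cocycle_Suc_same [simp]: "cocycle C (Suc k) k = C k"
  by (simp add: cocycle_def)

lemma cocycle_Suc: "n \<le> m \<Longrightarrow> cocycle C (Suc m) n = C m ** cocycle C m n"
  by (simp add: cocycle_def Suc_diff_le)

lemma fwd_eq_quotient:
  fixes C F :: "nat \<Rightarrow> real^'n^'n"
  assumes F: "\<forall>k\<ge>b. invertible (F k)"
    and C: "\<forall>k\<ge>b. C k = F (Suc k) ** matrix_inv (F k)"
    and "b \<le> n"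
  shows "fwd C n j = F (n + j) ** matrix_inv (F n)"
proof (induction j)
  case 0
  show ?case using F \<open>b \<le> n\<close> by (simp add: matrix_inv_cancel)
next
  case (Suc j)
  have "fwd C n (Suc j) = F (Suc (n + j)) ** (matrix_inv (F (n + j)) ** F (n + j)) ** matrix_inv (F n)"
    using Suc C \<open>b \<le> n\<close> by (simp add: matrix_mul_assoc)
  then show ?case using F \<open>b \<le> n\<close> by (simp add: matrix_inv_cancel)
qed

lemma cocycle_eq_quotient:
  fixes C F :: "nat \<Rightarrow> real^'n^'n"
  assumes F: "\<forall>k\<ge>b. invertible (F k)"
    and C: "\<forall>k\<ge>b. C k = F (Suc k) ** matrix_inv (F k)"
    and "b \<le> m" "b \<le> n"
  shows "cocycle C m n = F m ** matrix_inv (F n)"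
proof (cases "n \<le> m")
  case True
  then show ?thesis using fwd_eq_quotient[OF F C \<open>b \<le> n\<close>, of "m - n"] by (simp add: cocycle_def)
next
  case False
  have "cocycle C m n = matrix_inv (F n ** matrix_inv (F m))"
    using False fwd_eq_quotient[OF F C \<open>b \<le> m\<close>, of "n - m"] by (simp add: cocycle_def)
  also have "\<dots> = F m ** matrix_inv (F n)"
    using matrix_inv_cancel[of "F m"] matrix_inv_cancel[of "F n"] F assms(3,4)
    by (intro matrix_inv_unique) (metis matrix_mul_assoc matrix_mul_rid)+
  finally show ?thesis .
qed

lemma invertible_fwd:
  fixes C :: "nat \<Rightarrow> real^'n^'n"
  assumes "\<forall>k\<ge>b. invertible (C k)"
  shows "invertible (fwd C b j)"
proof (induction j)
  case 0
  show ?case unfolding invertible_def by (auto intro: exI[of _ "mat 1"])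
qed (use assms in \<open>simp add: invertible_mult\<close>)

definition fundamental_matrix :: "(nat \<Rightarrow> 'n::finite mat) \<Rightarrow> nat \<Rightarrow> nat \<Rightarrow> 'n mat" where
  "fundamental_matrix C b k = fwd C b (k - b)"

lemma invertible_fundamental_matrix:
  fixes C :: "nat \<Rightarrow> real^'n^'n"
  assumes "\<forall>k\<ge>b. invertible (C k)"
  shows "invertible (fundamental_matrix C b k)"
  using assms
  by (simp add: fundamental_matrix_def invertible_fwd)

lemma cocycle_fundamental_matrix:
  fixes C :: "nat \<Rightarrow> real^'n^'n"
  assumes C: "\<forall>k\<ge>b. invertible (C k)" and "b \<le> m" "b \<le> n"
  shows "cocycle C m n = fundamental_matrix C b m ** matrix_inv (fundamental_matrix C b n)"
proof (rule cocycle_eq_quotient[OF _ _ assms(2,3)])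
  show "\<forall>k\<ge>b. invertible (fundamental_matrix C b k)"
    using invertible_fundamental_matrix[OF C] by blast
  show "\<forall>k\<ge>b. C k = fundamental_matrix C b (Suc k) ** matrix_inv (fundamental_matrix C b k)"
  proof (intro allI impI)
    fix k assume "b \<le> k"
    then have "fundamental_matrix C b (Suc k) = C k ** fundamental_matrix C b k"
      by (simp add: fundamental_matrix_def Suc_diff_le)
    then show "C k = fundamental_matrix C b (Suc k) ** matrix_inv (fundamental_matrix C b k)"
      using matrix_inv_cancel(1)[OF invertible_fundamental_matrix[OF C]]
      by (simp add: matrix_mul_assoc[symmetric])
  qed
qed

lemma cocycle_comp:
  fixes C :: "nat \<Rightarrow> real^'n^'n"
  assumes "\<forall>k\<ge>b. invertible (C k)" "b \<le> m" "b \<le> k" "b \<le> n"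
  shows "cocycle C m k ** cocycle C k n = cocycle C m n"
proof -
  let ?\<Phi> = "fundamental_matrix C b"
  have "cocycle C m k ** cocycle C k n = ?\<Phi> m ** (matrix_inv (?\<Phi> k) ** ?\<Phi> k) ** matrix_inv (?\<Phi> n)"
    using cocycle_fundamental_matrix[OF assms(1)] assms(2-4) by (simp add: matrix_mul_assoc)
  then show ?thesis
    using matrix_inv_cancel(2)[OF invertible_fundamental_matrix[OF assms(1)]]
      cocycle_fundamental_matrix[OF assms(1,2,4)] by simp
qed

lemma cocycle_inverse:
  fixes C :: "nat \<Rightarrow> real^'n^'n"
  assumes "\<forall>k\<ge>b. invertible (C k)" "b \<le> m" "b \<le> n"
  shows "cocycle C m n ** cocycle C n m = mat 1"
  using cocycle_comp[OF assms(1,2,3,2)] by simp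

lemma invertible_cocycle:
  fixes C :: "nat \<Rightarrow> real^'n^'n"
  assumes "\<forall>k\<ge>b. invertible (C k)" "b \<le> m" "b \<le> n"
  shows "invertible (cocycle C m n)"
  using cocycle_inverse[OF assms] cocycle_inverse[OF assms(1,3,2)] invertible_def by blast

lemma cocycle_commute:
  fixes C P :: "nat \<Rightarrow> real^'n^'n"
  assumes C: "\<forall>k\<ge>b. invertible (C k)"
    and P: "\<forall>k\<ge>b. C k ** P k = P (Suc k) ** C k"
    and "b \<le> m" "b \<le> n"
  shows "cocycle C m n ** P n = P m ** cocycle C m n"
proof -
  have forward: "cocycle C m n ** P n = P m ** cocycle C m n" if "b \<le> n" "n \<le> m" for m n
    using \<open>n \<le> m\<close>
  proof (induction m rule: dec_induct)
    case (step m)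
    have "cocycle C (Suc m) n ** P n = C m ** (cocycle C m n ** P n)"
      using cocycle_Suc[OF step(1), of C] by (simp add: matrix_mul_assoc)
    also have "\<dots> = (C m ** P m) ** cocycle C m n" using step(3) by (simp add: matrix_mul_assoc)
    finally show ?case
      using P step(1) \<open>b \<le> n\<close> cocycle_Suc[OF step(1), of C] by (simp add: matrix_mul_assoc)
  qed simp
  show ?thesis
  proof (cases "n \<le> m")
    case False
    let ?X = "cocycle C n m" and ?Y = "cocycle C m n"
    have XY: "?X ** ?Y = mat 1" "?Y ** ?X = mat 1" using cocycle_inverse[OF C] assms by auto
    have "?Y ** P n = ?Y ** P n ** (?X ** ?Y)" using XY by simp
    also have "\<dots> = ?Y ** (P n ** ?X) ** ?Y" by (simp add: matrix_mul_assoc)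
    also have "\<dots> = ?Y ** (?X ** P m) ** ?Y" using forward[of m n] False assms by simp
    also have "\<dots> = (?Y ** ?X) ** P m ** ?Y" by (simp add: matrix_mul_assoc)
    finally show ?thesis using XY by simp
  qed (use forward assms in auto)
qed

lemma cocycle_scaleR:
  fixes C :: "nat \<Rightarrow> real^'n^'n" and q :: "nat \<Rightarrow> real"
  assumes C: "\<forall>k\<ge>b. invertible (C k)"
    and q: "\<forall>k\<ge>b. q k \<noteq> 0"
    and "b \<le> m" "b \<le> n"
  shows "cocycle (\<lambda>k. (q (Suc k) / q k) *\<^sub>R C k) m n = (q m / q n) *\<^sub>R cocycle C m n"
proof -
  let ?\<Phi> = "fundamental_matrix C b"
  have \<Phi>: "invertible (?\<Phi> k)" for k by (rule invertible_fundamental_matrix[OF C])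
  have inv: "matrix_inv (q k *\<^sub>R ?\<Phi> k) = (1 / q k) *\<^sub>R matrix_inv (?\<Phi> k)" if "b \<le> k" for k
    using matrix_inv_scaleR[OF \<Phi>] q that by auto
  have "cocycle (\<lambda>k. (q (Suc k) / q k) *\<^sub>R C k) m n = q m *\<^sub>R ?\<Phi> m ** matrix_inv (q n *\<^sub>R ?\<Phi> n)"
  proof (rule cocycle_eq_quotient[OF _ _ assms(3,4)])
    show "\<forall>k\<ge>b. invertible (q k *\<^sub>R ?\<Phi> k)" using q \<Phi> scalar_invertible by blast
    show "\<forall>k\<ge>b. (q (Suc k) / q k) *\<^sub>R C k = q (Suc k) *\<^sub>R ?\<Phi> (Suc k) ** matrix_inv (q k *\<^sub>R ?\<Phi> k)"
    proof (intro allI impI)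
      fix k assume "b \<le> k"
      then have "C k = ?\<Phi> (Suc k) ** matrix_inv (?\<Phi> k)"
        using cocycle_fundamental_matrix[OF C, of "Suc k" k] by simp
      then show "(q (Suc k) / q k) *\<^sub>R C k = q (Suc k) *\<^sub>R ?\<Phi> (Suc k) ** matrix_inv (q k *\<^sub>R ?\<Phi> k)"
        using inv q \<open>b \<le> k\<close> by (simp add: matrix_scalar_ac scalar_matrix_assoc[symmetric])
    qed
  qed
  also have "\<dots> = (q m / q n) *\<^sub>R cocycle C m n"
    using inv[OF assms(4)] cocycle_fundamental_matrix[OF C assms(3,4)]
    by (simp add: matrix_scalar_ac scalar_matrix_assoc[symmetric])
  finally show ?thesis .
qed

definition dyadic_sampling :: "(nat \<Rightarrow> 'n::finite mat) \<Rightarrow> nat \<Rightarrow> 'n mat" where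
  "dyadic_sampling C k = cocycle C (2^(k+1)) (2^k)"

lemma cocycle_dyadic_sampling:
  fixes C :: "nat \<Rightarrow> real^'n^'n"
  assumes C: "\<forall>k\<ge>1. invertible (C k)"
  shows "cocycle (dyadic_sampling C) m n = cocycle C (2^m) (2^n)"
proof -
  let ?F = "\<lambda>k. fundamental_matrix C 1 (2^k)"
  have "cocycle (dyadic_sampling C) m n = ?F m ** matrix_inv (?F n)"
  proof (rule cocycle_eq_quotient[of 0])
    show "\<forall>k\<ge>0. invertible (?F k)" using invertible_fundamental_matrix[OF C] by blast
    show "\<forall>k\<ge>0. dyadic_sampling C k = ?F (Suc k) ** matrix_inv (?F k)"
      using cocycle_fundamental_matrix[OF C] by (simp add: dyadic_sampling_def)
  qed simp_all
  then show ?thesis using cocycle_fundamental_matrix[OF C] by simp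
qed

lemma cocycle_scaleR_const:
  fixes C :: "nat \<Rightarrow> real^'n^'n"
  assumes C: "\<forall>k\<ge>b. invertible (C k)" and "c \<noteq> 0" "b \<le> n" "n \<le> m"
  shows "cocycle (\<lambda>k. c *\<^sub>R C k) m n = c^(m - n) *\<^sub>R cocycle C m n"
    and "cocycle (\<lambda>k. c *\<^sub>R C k) n m = (1/c)^(m - n) *\<^sub>R cocycle C n m"
proof -
  have q: "\<forall>k\<ge>b. c^k \<noteq> 0" using \<open>c \<noteq> 0\<close> by simp
  have "(\<lambda>k. c *\<^sub>R C k) = (\<lambda>k. (c^Suc k / c^k) *\<^sub>R C k)" using \<open>c \<noteq> 0\<close> by simp
  then have scaled: "cocycle (\<lambda>k. c *\<^sub>R C k) i j = (c^i / c^j) *\<^sub>R cocycle C i j" if "b \<le> i" "b \<le> j" for i j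
    using cocycle_scaleR[OF C q that] by simp
  obtain k where "m = n + k" using \<open>n \<le> m\<close> le_Suc_ex by blast
  then show "cocycle (\<lambda>k. c *\<^sub>R C k) m n = c^(m - n) *\<^sub>R cocycle C m n"
    and "cocycle (\<lambda>k. c *\<^sub>R C k) n m = (1/c)^(m - n) *\<^sub>R cocycle C n m"
    using scaled assms by (simp_all add: power_add power_one_over)
qed

section \<open>Gaps between the level sets of a monotone index\<close>

text \<open>Here \<open>res\<close> stands for the resolvent set and \<open>idx\<close> for the stable dimension.\<close>

locale spectral_index =
  fixes res :: "real set" and idx :: "real \<Rightarrow> nat" and d :: nat
  assumes d_pos: "1 \<le> d"
    and res_pos: "s \<in> res \<Longrightarrow> 0 < s"
    and idx_le: "s \<in> res \<Longrightarrow> idx s \<le> d"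
    and idx_mono: "s \<in> res \<Longrightarrow> s' \<in> res \<Longrightarrow> s \<le> s' \<Longrightarrow> idx s \<le> idx s'"
    and res_between: "s1 \<in> res \<Longrightarrow> s2 \<in> res \<Longrightarrow> s1 \<le> s \<Longrightarrow> s \<le> s2 \<Longrightarrow> idx s1 = idx s2 \<Longrightarrow> s \<in> res"
    and idx_locally_const:
      "s \<in> res \<Longrightarrow> \<exists>lo hi. lo < s \<and> s < hi \<and> (\<forall>u. lo < u \<and> u < hi \<longrightarrow> u \<in> res \<and> idx u = idx s)"
    and idx_small: "\<exists>e>0. \<forall>s. 0 < s \<and> s \<le> e \<longrightarrow> s \<in> res \<and> idx s = 0"
    and idx_large: "\<exists>L. \<forall>s\<ge>L. s \<in> res \<and> idx s = d"
begin

definition level :: "nat \<Rightarrow> real set" where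
  "level k = {s \<in> res. idx s = k}"

lemma level_less: "s \<in> level k \<Longrightarrow> s' \<in> level k' \<Longrightarrow> k < k' \<Longrightarrow> s < s'"
  using idx_mono[of s' s] by (force simp: level_def)

lemma level_no_extremum:
  assumes "s \<in> level k"
  shows "\<exists>s'\<in>level k. s' < s" "\<exists>s'\<in>level k. s < s'"
proof -
  obtain lo hi where "lo < s" "s < hi" and near: "\<And>u. lo < u \<Longrightarrow> u < hi \<Longrightarrow> u \<in> level k"
    using idx_locally_const[of s] assms by (auto simp: level_def)
  show "\<exists>s'\<in>level k. s' < s"
    using near[of "(lo + s) / 2"] \<open>lo < s\<close> \<open>s < hi\<close> by (intro bexI[of _ "(lo + s) / 2"]) auto
  show "\<exists>s'\<in>level k. s < s'"
    using near[of "(s + hi) / 2"] \<open>lo < s\<close> \<open>s < hi\<close> by (intro bexI[of _ "(s + hi) / 2"]) auto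
qed

lemma level_side:
  assumes "s \<notin> res"
  shows "(\<forall>x\<in>level k. x < s) \<or> (\<forall>x\<in>level k. s < x)"
proof (rule ccontr)
  assume "\<not> ?thesis"
  then obtain x y where "x \<in> level k" "y \<in> level k" "s \<le> x" "y \<le> s" by (auto simp: not_less)
  then show False using res_between[of y x s] assms by (auto simp: level_def)
qed

definition levels :: "nat list" where
  "levels = sorted_list_of_set (idx ` res)"

definition gaps :: nat where
  "gaps = length levels - 1"

lemma idx_image_subset: "idx ` res \<subseteq> {0..d}"
  using idx_le by auto

lemma finite_idx_image: "finite (idx ` res)"
  using idx_image_subset finite_subset by blast

lemma zero_d_in_idx_image: "0 \<in> idx ` res" "d \<in> idx ` res"
  using idx_small idx_large by (force, force)

lemma length_levels: "length levels = Suc gaps"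
  and gaps_pos: "1 \<le> gaps"
  and gaps_le: "gaps \<le> d"
proof -
  have "card {0, d} \<le> card (idx ` res)"
    using zero_d_in_idx_image finite_idx_image by (intro card_mono) auto
  moreover have "card (idx ` res) \<le> card {0..d}"
    using idx_image_subset by (intro card_mono) auto
  ultimately show "length levels = Suc gaps" "1 \<le> gaps" "gaps \<le> d"
    using d_pos finite_idx_image by (auto simp: levels_def gaps_def)
qed

lemma set_levels: "set levels = idx ` res"
  using finite_idx_image by (simp add: levels_def)

lemma levels_less: "i < j \<Longrightarrow> j \<le> gaps \<Longrightarrow> levels ! i < levels ! j"
  using sorted_wrt_nth_less[OF strict_sorted_list_of_set[of "idx ` res"]] length_levels
  by (simp add: levels_def)

lemma level_nonempty: "i \<le> gaps \<Longrightarrow> level (levels ! i) \<noteq> {}"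
  using nth_mem[of i levels] length_levels set_levels by (force simp: level_def)

lemma res_in_level: "s \<in> res \<Longrightarrow> \<exists>j\<le>gaps. s \<in> level (levels ! j)"
  using set_levels length_levels by (force simp: level_def in_set_conv_nth less_Suc_eq_le)

lemma levels_first: "levels ! 0 = 0" and levels_last: "levels ! gaps = d"
proof -
  obtain i j where "i \<le> gaps" "levels ! i = 0" "j \<le> gaps" "levels ! j = d"
    using zero_d_in_idx_image set_levels length_levels
    by (metis in_set_conv_nth less_Suc_eq_le)
  moreover have "levels ! gaps \<le> d"
    using nth_mem[of gaps levels] length_levels set_levels idx_image_subset by force
  ultimately show "levels ! 0 = 0" "levels ! gaps = d"
    using levels_less[of 0 i] levels_less[of j gaps] by (cases "i = 0"; cases "j = gaps"; simp)+
qed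

definition gap_lo :: "nat \<Rightarrow> real" where
  "gap_lo i = Sup (level (levels ! (i - 1)))"

definition gap_hi :: "nat \<Rightarrow> real" where
  "gap_hi i = Inf (level (levels ! i))"

lemma le_gap_lo:
  assumes "1 \<le> i" "i \<le> gaps" "j < i" "x \<in> level (levels ! j)"
  shows "x \<le> gap_lo i"
proof -
  obtain y where y: "y \<in> level (levels ! i)" using level_nonempty assms by blast
  have bdd: "bdd_above (level (levels ! (i - 1)))"
    using level_less[OF _ y] levels_less[of "i - 1" i] assms by (intro bdd_aboveI[of _ y]) force
  obtain z where z: "z \<in> level (levels ! (i - 1))" using level_nonempty assms by force
  have "\<exists>z\<in>level (levels ! (i - 1)). x \<le> z"
  proof (cases "j = i - 1")
    case False
    then have "j < i - 1" using assms by simp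
    then have "x < z" using level_less[OF assms(4) z] levels_less[of j "i - 1"] assms by simp
    with z show ?thesis by (auto intro: less_imp_le)
  qed (use assms in auto)
  then show ?thesis using bdd cSup_upper unfolding gap_lo_def by (meson order_trans)
qed

lemma gap_hi_le:
  assumes "i \<le> j" "j \<le> gaps" "x \<in> level (levels ! j)"
  shows "gap_hi i \<le> x"
proof -
  have bdd: "bdd_below (level (levels ! i))"
    using res_pos by (intro bdd_belowI[of _ 0]) (auto simp: level_def less_imp_le)
  obtain z where z: "z \<in> level (levels ! i)" using level_nonempty assms by force
  have "\<exists>z\<in>level (levels ! i). z \<le> x"
  proof (cases "j = i")
    case False
    then have "i < j" using assms by simp
    then have "z < x" using level_less[OF z assms(3)] levels_less[of i j] assms by simp
    with z show ?thesis by (auto intro: less_imp_le)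
  qed (use assms in auto)
  then show ?thesis using bdd cInf_lower unfolding gap_hi_def by (meson order_trans)
qed

lemma gap_lo_pos:
  assumes "1 \<le> i" "i \<le> gaps"
  shows "0 < gap_lo i"
proof -
  obtain x where x: "x \<in> level (levels ! (i - 1))" using level_nonempty[of "i - 1"] assms by force
  then have "0 < x" using res_pos by (simp add: level_def)
  also have "x \<le> gap_lo i" using le_gap_lo[OF assms _ x] assms by simp
  finally show ?thesis .
qed

lemma gap_lo_le_gap_hi:
  assumes "1 \<le> i" "i \<le> gaps"
  shows "gap_lo i \<le> gap_hi i"
proof -
  have "gap_lo i \<le> y" if "y \<in> level (levels ! i)" for y
    unfolding gap_lo_def
    using level_nonempty[of "i - 1"] level_less[OF _ that] levels_less[of "i - 1" i] assms
    by (intro cSup_least) (auto intro: less_imp_le)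
  then show ?thesis
    unfolding gap_hi_def using level_nonempty assms by (intro cInf_greatest) auto
qed

lemma gap_hi_less_gap_lo:
  assumes "1 \<le> i" "i < gaps"
  shows "gap_hi i < gap_lo (Suc i)"
proof -
  obtain x where x: "x \<in> level (levels ! i)" using level_nonempty assms by force
  obtain s1 s2 where "s1 \<in> level (levels ! i)" "s1 < x" "s2 \<in> level (levels ! i)" "x < s2"
    using level_no_extremum[OF x] by blast
  then show ?thesis
    using gap_hi_le[of i i s1] le_gap_lo[of "Suc i" i s2] assms by force
qed

lemma in_gap_if_not_res:
  assumes "0 < s" "s \<notin> res"
  shows "\<exists>i\<in>{1..gaps}. s \<in> {gap_lo i..gap_hi i}"
proof -
  define above where "above j \<longleftrightarrow> (\<forall>x\<in>level (levels ! j). s < x)" for j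
  obtain e where e: "0 < e" "\<And>s. 0 < s \<Longrightarrow> s \<le> e \<Longrightarrow> s \<in> res \<and> idx s = 0"
    using idx_small by blast
  obtain L where L: "\<And>s. s \<ge> L \<Longrightarrow> s \<in> res \<and> idx s = d"
    using idx_large by blast
  have "max L (s + 1) \<in> level (levels ! gaps)" using L levels_last by (simp add: level_def)
  then have "above gaps" using level_side[OF assms(2)] unfolding above_def by force
  have "min e (s / 2) \<in> level (levels ! 0)" using e assms levels_first by (simp add: level_def)
  then have "\<not> above 0" using assms unfolding above_def by force
  define i where "i = (LEAST j. above j)"
  have "above i" using LeastI[of above gaps] \<open>above gaps\<close> unfolding i_def .
  have "i \<le> gaps" using Least_le[of above gaps] \<open>above gaps\<close> unfolding i_def .
  have "1 \<le> i" using \<open>above i\<close> \<open>\<not> above 0\<close> by (cases i) auto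
  have "\<not> above (i - 1)"
    using not_less_Least[of "i - 1" above] \<open>1 \<le> i\<close> unfolding i_def by simp
  then have below: "\<forall>x\<in>level (levels ! (i - 1)). x < s"
    using level_side[OF assms(2)] unfolding above_def by blast
  have "gap_lo i \<le> s" unfolding gap_lo_def
    using level_nonempty[of "i - 1"] below \<open>i \<le> gaps\<close> by (intro cSup_least) (auto intro: less_imp_le)
  moreover have "s \<le> gap_hi i" unfolding gap_hi_def
    using level_nonempty[of i] \<open>above i\<close> \<open>i \<le> gaps\<close> unfolding above_def
    by (intro cInf_greatest) (auto intro: less_imp_le)
  ultimately show ?thesis using \<open>1 \<le> i\<close> \<open>i \<le> gaps\<close> by auto
qed

lemma not_res_if_in_gap:
  assumes "1 \<le> i" "i \<le> gaps" "gap_lo i \<le> s" "s \<le> gap_hi i"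
  shows "s \<notin> res"
proof
  assume "s \<in> res"
  then obtain j where j: "j \<le> gaps" "s \<in> level (levels ! j)" using res_in_level by blast
  show False
  proof (cases "j < i")
    case True
    obtain s' where "s' \<in> level (levels ! j)" "s < s'" using level_no_extremum(2)[OF j(2)] by blast
    then show False using le_gap_lo[of i j s'] assms True by auto
  next
    case False
    obtain s' where "s' \<in> level (levels ! j)" "s' < s" using level_no_extremum(1)[OF j(2)] by blast
    then show False using gap_hi_le[of i j s'] assms False j by auto
  qed
qed

theorem complement_res_eq_gaps:
  "{s. 0 < s \<and> s \<notin> res} = (\<Union>i\<in>{1..gaps}. {gap_lo i..gap_hi i})"
proof (intro equalityI subsetI)
  fix s assume "s \<in> {s. 0 < s \<and> s \<notin> res}"
  then show "s \<in> (\<Union>i\<in>{1..gaps}. {gap_lo i..gap_hi i})" using in_gap_if_not_res by auto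
next
  fix s assume "s \<in> (\<Union>i\<in>{1..gaps}. {gap_lo i..gap_hi i})"
  then obtain i where i: "1 \<le> i" "i \<le> gaps" "gap_lo i \<le> s" "s \<le> gap_hi i" by auto
  then have "0 < s" using gap_lo_pos[OF i(1,2)] by linarith
  then show "s \<in> {s. 0 < s \<and> s \<notin> res}" using not_res_if_in_gap[OF i] by simp
qed

end

section \<open>The exponential dichotomy spectrum\<close>

definition fixed_space :: "real^'n^'n \<Rightarrow> (real^'n) set" where
  "fixed_space P = {x. P *v x = x}"

lemma subspace_fixed_space: "subspace (fixed_space P)"
  unfolding subspace_def fixed_space_def
  by (auto simp: matrix_vector_right_distrib matrix_vector_mult_scaleR)

lemma exp_mult_diff_eq_power:
  assumes "n \<le> m" shows "exp (c * (real m - real n)) = exp c ^ (m - n)"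
proof -
  have "exp (c * (real m - real n)) = exp (real (m - n) * c)"
    using assms by (simp add: of_nat_diff mult.commute)
  then show ?thesis by (simp add: exp_of_nat_mult)
qed

locale bounded_growth_cocycle =
  fixes B :: "nat \<Rightarrow> real^'n^'n" and M :: "nat \<Rightarrow> real^'n \<Rightarrow> real" and K0 g :: real
  assumes invertible_B: "\<forall>k\<ge>0. invertible (B k)"
    and norm_M: "\<forall>n. is_norm (M n)"
    and K0_pos: "0 < K0" and g_ge_1: "1 \<le> g"
    and growth: "\<And>m n x. n \<le> m \<Longrightarrow>
      M m (cocycle B m n *v x) \<le> K0 * g^(m - n) * M n x \<and> M n (cocycle B n m *v x) \<le> K0 * g^(m - n) * M m x"
begin

lemma M_nonneg: "0 \<le> M n x"
  using norm_M unfolding is_norm_def by blast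

lemma M_eq_0_iff: "M n x = 0 \<longleftrightarrow> x = 0"
  using norm_M unfolding is_norm_def by blast

lemma M_scaleR: "M n (c *\<^sub>R x) = \<bar>c\<bar> * M n x"
  using norm_M unfolding is_norm_def by blast

lemma M_zero [simp]: "M n 0 = 0"
  using M_eq_0_iff by blast

lemma cocycle_cancel: "cocycle B n m *v (cocycle B m n *v x) = x"
  by (simp add: matrix_vector_mul_assoc cocycle_inverse[OF invertible_B])

text \<open>\<open>dichotomy \<sigma> P K \<theta>\<close>: the rescaled cocycle \<open>\<sigma>\<inverse>B\<close> has an exponential dichotomy with rate
  \<open>\<theta> = e\<^sup>-\<^sup>\<lambda>\<close>; the growth bounds of a strong dichotomy are omitted, as they follow from those of \<open>B\<close>.\<close>

definition dichotomy :: "real \<Rightarrow> (nat \<Rightarrow> real^'n^'n) \<Rightarrow> real \<Rightarrow> real \<Rightarrow> bool" where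
  "dichotomy \<sigma> P K \<theta> \<longleftrightarrow> 0 < K \<and> 0 < \<theta> \<and> \<theta> < 1 \<and>
     (\<forall>n. P n ** P n = P n \<and> B n ** P n = P (Suc n) ** B n) \<and>
     (\<forall>m n x. n \<le> m \<longrightarrow>
        M m ((cocycle B m n ** P n) *v x) \<le> K * (\<sigma> * \<theta>)^(m - n) * M n x \<and>
        M n ((cocycle B n m ** (mat 1 - P m)) *v x) \<le> K * (\<theta> / \<sigma>)^(m - n) * M m x)"

lemma dichotomyD:
  assumes "dichotomy \<sigma> P K \<theta>"
  shows "0 < K" "0 < \<theta>" "\<theta> < 1" "P n ** P n = P n" "B n ** P n = P (Suc n) ** B n"
    and "n \<le> m \<Longrightarrow> M m ((cocycle B m n ** P n) *v x) \<le> K * (\<sigma> * \<theta>)^(m - n) * M n x"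
    and "n \<le> m \<Longrightarrow> M n ((cocycle B n m ** (mat 1 - P m)) *v x) \<le> K * (\<theta> / \<sigma>)^(m - n) * M m x"
  using assms unfolding dichotomy_def by auto

lemma dichotomy_commute:
  "dichotomy \<sigma> P K \<theta> \<Longrightarrow> cocycle B m n ** P n = P m ** cocycle B m n"
  using invertible_B dichotomyD(5) by (intro cocycle_commute[OF invertible_B]) auto

lemma dichotomy_projection_bound: "dichotomy \<sigma> P K \<theta> \<Longrightarrow> M n (P n *v x) \<le> K * M n x"
  using dichotomyD(6)[of \<sigma> P K \<theta> n n x] by simp

definition stable_space :: "real \<Rightarrow> nat \<Rightarrow> (real^'n) set" where
  "stable_space \<sigma> n = {x. \<exists>C. \<forall>m\<ge>n. M m (cocycle B m n *v x) \<le> C * \<sigma>^(m - n)}"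

lemma stable_space_mono:
  assumes "0 < \<sigma>1" "\<sigma>1 \<le> \<sigma>2"
  shows "stable_space \<sigma>1 n \<subseteq> stable_space \<sigma>2 n"
proof
  fix x assume "x \<in> stable_space \<sigma>1 n"
  then obtain C where C: "\<And>m. n \<le> m \<Longrightarrow> M m (cocycle B m n *v x) \<le> C * \<sigma>1^(m - n)"
    unfolding stable_space_def by blast
  have "M m (cocycle B m n *v x) \<le> max C 0 * \<sigma>2^(m - n)" if "n \<le> m" for m
  proof -
    have "C * \<sigma>1^(m - n) \<le> max C 0 * \<sigma>2^(m - n)"
      using assms by (intro mult_mono power_mono) auto
    then show ?thesis using C[OF that] by linarith
  qed
  then show "x \<in> stable_space \<sigma>2 n" unfolding stable_space_def by blast
qed

lemma fixed_space_subset_stable_space: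
  assumes dich: "dichotomy \<sigma> P K \<theta>" and "0 < \<sigma>"
  shows "fixed_space (P n) \<subseteq> stable_space \<sigma> n"
proof
  note D = dichotomyD[OF dich]
  fix x assume "x \<in> fixed_space (P n)"
  then have x: "P n *v x = x" by (simp add: fixed_space_def)
  have "M m (cocycle B m n *v x) \<le> (K * M n x) * \<sigma>^(m - n)" if "n \<le> m" for m
  proof -
    have "M m (cocycle B m n *v x) = M m ((cocycle B m n ** P n) *v x)"
      using x by (simp add: matrix_vector_mul_assoc[symmetric])
    also have "\<dots> \<le> K * (\<sigma> * \<theta>)^(m - n) * M n x" using D(6) that by blast
    also have "\<dots> \<le> K * \<sigma>^(m - n) * M n x"
      using D(1-3) \<open>0 < \<sigma>\<close> M_nonneg
      by (intro mult_right_mono mult_left_mono power_mono) (auto simp: mult_le_cancel_left1)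
    finally show ?thesis by (simp add: mult_ac)
  qed
  then show "x \<in> stable_space \<sigma> n" unfolding stable_space_def by blast
qed

text \<open>The unstable component \<open>z\<close> of a vector whose orbit grows at most like \<open>\<sigma>\<^sup>m\<close> is the
  backward image of the unstable component at time \<open>n + k\<close>, so \<open>|z| = O(\<theta>\<^sup>k)\<close> for every \<open>k\<close>.\<close>

lemma stable_space_subset_fixed_space:
  assumes dich: "dichotomy \<sigma> P K \<theta>" and "0 < \<sigma>"
  shows "stable_space \<sigma> n \<subseteq> fixed_space (P n)"
proof
  note D = dichotomyD[OF dich]
  fix x assume "x \<in> stable_space \<sigma> n"
  then obtain C where C: "\<And>m. n \<le> m \<Longrightarrow> M m (cocycle B m n *v x) \<le> C * \<sigma>^(m - n)"
    unfolding stable_space_def by blast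
  define z where "z = x - P n *v x"
  have z_bound: "M n z \<le> K * C * \<theta>^k" for k
  proof -
    let ?m = "n + k"
    have "(mat 1 - P ?m) ** cocycle B ?m n = cocycle B ?m n ** (mat 1 - P n)"
      using dichotomy_commute[OF dich, of ?m n] by (simp add: matrix_diff_rdistrib matrix_diff_ldistrib)
    then have "(cocycle B n ?m ** (mat 1 - P ?m)) *v (cocycle B ?m n *v x)
        = cocycle B n ?m *v (cocycle B ?m n *v ((mat 1 - P n) *v x))"
      by (metis matrix_mul_assoc matrix_vector_mul_assoc)
    then have "z = (cocycle B n ?m ** (mat 1 - P ?m)) *v (cocycle B ?m n *v x)"
      by (simp add: cocycle_cancel z_def matrix_vector_mult_diff_rdistrib)
    then have "M n z \<le> K * (\<theta> / \<sigma>)^k * M ?m (cocycle B ?m n *v x)" using D(7)[of n ?m] by simp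
    also have "\<dots> \<le> K * (\<theta> / \<sigma>)^k * (C * \<sigma>^k)"
      using C[of ?m] D(1,2) \<open>0 < \<sigma>\<close> by (intro mult_left_mono) auto
    also have "\<dots> = K * C * \<theta>^k" using \<open>0 < \<sigma>\<close> by (simp add: power_divide)
    finally show ?thesis .
  qed
  have "(\<lambda>k. K * C * \<theta>^k) \<longlonglongrightarrow> K * C * 0"
    using D(2,3) by (intro tendsto_mult tendsto_const LIMSEQ_power_zero) auto
  then have "M n z \<le> 0" using z_bound by (intro LIMSEQ_le_const) auto
  then have "z = 0" using M_nonneg M_eq_0_iff by (meson antisym)
  then show "x \<in> fixed_space (P n)" by (simp add: z_def fixed_space_def)
qed

lemma stable_space_eq_fixed_space:
  "dichotomy \<sigma> P K \<theta> \<Longrightarrow> 0 < \<sigma> \<Longrightarrow> stable_space \<sigma> n = fixed_space (P n)"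
  using fixed_space_subset_stable_space stable_space_subset_fixed_space by blast

lemma fixed_space_eq_image:
  assumes "dichotomy \<sigma> P K \<theta>"
  shows "fixed_space (P n) = (\<lambda>x. cocycle B n 0 *v x) ` fixed_space (P 0)"
proof
  show "fixed_space (P n) \<subseteq> (\<lambda>x. cocycle B n 0 *v x) ` fixed_space (P 0)"
  proof
    fix y assume "y \<in> fixed_space (P n)"
    then have "P n *v y = y" by (simp add: fixed_space_def)
    have "P 0 *v (cocycle B 0 n *v y) = (cocycle B 0 n ** P n) *v y"
      using dichotomy_commute[OF assms, of 0 n] by (simp add: matrix_vector_mul_assoc)
    then have "P 0 *v (cocycle B 0 n *v y) = cocycle B 0 n *v y"
      using \<open>P n *v y = y\<close> by (simp add: matrix_vector_mul_assoc[symmetric])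
    then show "y \<in> (\<lambda>x. cocycle B n 0 *v x) ` fixed_space (P 0)"
      by (intro image_eqI[of _ _ "cocycle B 0 n *v y"]) (simp_all add: cocycle_cancel fixed_space_def)
  qed
  show "(\<lambda>x. cocycle B n 0 *v x) ` fixed_space (P 0) \<subseteq> fixed_space (P n)"
  proof
    fix y assume "y \<in> (\<lambda>x. cocycle B n 0 *v x) ` fixed_space (P 0)"
    then obtain x where x: "P 0 *v x = x" "y = cocycle B n 0 *v x" by (auto simp: fixed_space_def)
    then have "P n *v y = (cocycle B n 0 ** P 0) *v x"
      using dichotomy_commute[OF assms, of n 0] by (simp add: matrix_vector_mul_assoc)
    then show "y \<in> fixed_space (P n)"
      using x by (simp add: fixed_space_def matrix_vector_mul_assoc[symmetric])
  qed
qed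

lemma dichotomy_nearby:
  assumes dich: "dichotomy \<sigma> P K \<theta>" and "0 < \<sigma>" and "\<sigma> * \<theta> < \<sigma>'" "\<sigma>' < \<sigma> / \<theta>"
  shows "dichotomy \<sigma>' P K (max (\<sigma> * \<theta> / \<sigma>') (\<theta> * \<sigma>' / \<sigma>))"
proof -
  note D = dichotomyD[OF dich]
  define t where "t = max (\<sigma> * \<theta> / \<sigma>') (\<theta> * \<sigma>' / \<sigma>)"
  have "0 < \<sigma>'" using assms(3) \<open>0 < \<sigma>\<close> D(2) by (smt (verit) mult_pos_pos)
  have t: "0 < t" "t < 1" using assms \<open>0 < \<sigma>'\<close> D(2,3) by (auto simp: t_def field_simps less_max_iff_disj)
  have "\<sigma> * \<theta> / \<sigma>' \<le> t" by (simp add: t_def)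
  then have rate1: "\<sigma> * \<theta> \<le> \<sigma>' * t" using \<open>0 < \<sigma>'\<close> by (simp add: divide_le_eq mult.commute)
  have rate2: "\<theta> / \<sigma> \<le> t / \<sigma>'" using \<open>0 < \<sigma>\<close> \<open>0 < \<sigma>'\<close> by (simp add: t_def field_simps)
  show ?thesis unfolding dichotomy_def t_def[symmetric]
  proof (intro conjI t D(1) allI impI)
    fix m n x assume "n \<le> (m::nat)"
    have "K * (\<sigma> * \<theta>)^(m - n) * M n x \<le> K * (\<sigma>' * t)^(m - n) * M n x"
      using rate1 D(1,2) M_nonneg \<open>0 < \<sigma>\<close> by (intro mult_right_mono mult_left_mono power_mono) auto
    then show "M m ((cocycle B m n ** P n) *v x) \<le> K * (\<sigma>' * t)^(m - n) * M n x"
      using D(6)[OF \<open>n \<le> m\<close>, of x] by linarith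
    have "K * (\<theta> / \<sigma>)^(m - n) * M m x \<le> K * (t / \<sigma>')^(m - n) * M m x"
      using rate2 D(1,2) M_nonneg \<open>0 < \<sigma>\<close> by (intro mult_right_mono mult_left_mono power_mono) auto
    then show "M n ((cocycle B n m ** (mat 1 - P m)) *v x) \<le> K * (t / \<sigma>')^(m - n) * M m x"
      using D(7)[OF \<open>n \<le> m\<close>, of x] by linarith
  qed (use D(4,5) in auto)
qed

text \<open>The stable estimate comes from the first dichotomy, the unstable one from the second.\<close>

lemma dichotomy_between:
  assumes dich1: "dichotomy \<sigma>1 P1 K1 \<theta>1" and dich2: "dichotomy \<sigma>2 P2 K2 \<theta>2"
    and "0 < \<sigma>1" "\<sigma>1 \<le> \<sigma>" "\<sigma> \<le> \<sigma>2"
    and same_range: "\<And>n. fixed_space (P1 n) = fixed_space (P2 n)"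
  shows "dichotomy \<sigma> P2 ((K1 + 1) * K2) (max \<theta>1 \<theta>2)"
proof -
  note D1 = dichotomyD[OF dich1] and D2 = dichotomyD[OF dich2]
  define t where "t = max \<theta>1 \<theta>2"
  have t: "0 < t" "t < 1" using D1(2,3) D2(2,3) by (auto simp: t_def)
  show ?thesis unfolding dichotomy_def t_def[symmetric]
  proof (intro conjI t allI impI)
    show "0 < (K1 + 1) * K2" using D1(1) D2(1) by simp
    fix m n x assume "n \<le> (m::nat)"
    let ?y = "P2 n *v x"
    have "?y \<in> fixed_space (P1 n)"
      using same_range D2(4) by (simp add: fixed_space_def matrix_vector_mul_assoc)
    then have "M m ((cocycle B m n ** P2 n) *v x) = M m ((cocycle B m n ** P1 n) *v ?y)"
      by (simp add: fixed_space_def matrix_vector_mul_assoc[symmetric])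
    also have "\<dots> \<le> K1 * (\<sigma>1 * \<theta>1)^(m - n) * M n ?y" using D1(6) \<open>n \<le> m\<close> by blast
    also have "\<dots> \<le> K1 * (\<sigma> * t)^(m - n) * (K2 * M n x)"
      using D1(1,2) \<open>0 < \<sigma>1\<close> \<open>\<sigma>1 \<le> \<sigma>\<close> M_nonneg dichotomy_projection_bound[OF dich2]
      by (intro mult_mono power_mono) (auto simp: t_def)
    also have "\<dots> \<le> (K1 + 1) * K2 * (\<sigma> * t)^(m - n) * M n x"
      using D1(1) D2(1) t \<open>0 < \<sigma>1\<close> \<open>\<sigma>1 \<le> \<sigma>\<close> M_nonneg[of n x]
      by (simp add: algebra_simps mult_nonneg_nonneg)
    finally show "M m ((cocycle B m n ** P2 n) *v x) \<le> (K1 + 1) * K2 * (\<sigma> * t)^(m - n) * M n x" .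
    have "M n ((cocycle B n m ** (mat 1 - P2 m)) *v x) \<le> K2 * (\<theta>2 / \<sigma>2)^(m - n) * M m x"
      using D2(7) \<open>n \<le> m\<close> by blast
    also have "\<dots> \<le> (K1 + 1) * K2 * (t / \<sigma>)^(m - n) * M m x"
      using D1(1) D2(1,2) \<open>0 < \<sigma>1\<close> \<open>\<sigma>1 \<le> \<sigma>\<close> \<open>\<sigma> \<le> \<sigma>2\<close> M_nonneg
      by (intro mult_mono power_mono frac_le) (auto simp: t_def)
    finally show "M n ((cocycle B n m ** (mat 1 - P2 m)) *v x) \<le> (K1 + 1) * K2 * (t / \<sigma>)^(m - n) * M m x" .
  qed (use D2(4,5) in auto)
qed

lemma dichotomy_zero:
  assumes "0 < \<sigma>" "\<sigma> \<le> 1 / (2 * g)"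
  shows "dichotomy \<sigma> (\<lambda>_. 0) K0 (1/2)"
  unfolding dichotomy_def
proof (intro conjI allI impI)
  fix m n x assume "n \<le> (m::nat)"
  have "g \<le> (1/2) / \<sigma>" using assms g_ge_1 by (simp add: field_simps)
  then have "K0 * g^(m - n) * M m x \<le> K0 * ((1/2) / \<sigma>)^(m - n) * M m x"
    using K0_pos M_nonneg g_ge_1 by (intro mult_right_mono mult_left_mono power_mono) auto
  then show "M n ((cocycle B n m ** (mat 1 - 0)) *v x) \<le> K0 * ((1/2) / \<sigma>)^(m - n) * M m x"
    using growth[OF \<open>n \<le> m\<close>, of x] by simp
qed (use K0_pos assms M_nonneg in auto)

lemma dichotomy_id:
  assumes "2 * g \<le> \<sigma>"
  shows "dichotomy \<sigma> (\<lambda>_. mat 1) K0 (1/2)"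
  unfolding dichotomy_def
proof (intro conjI allI impI)
  fix m n x assume "n \<le> (m::nat)"
  have "g \<le> \<sigma> * (1/2)" using assms by simp
  then have "K0 * g^(m - n) * M n x \<le> K0 * (\<sigma> * (1/2))^(m - n) * M n x"
    using K0_pos M_nonneg g_ge_1 by (intro mult_right_mono mult_left_mono power_mono) auto
  then show "M m ((cocycle B m n ** mat 1) *v x) \<le> K0 * (\<sigma> * (1/2))^(m - n) * M n x"
    using growth[OF \<open>n \<le> m\<close>, of x] by simp
qed (use K0_pos M_nonneg assms g_ge_1 in auto)

definition resolvent :: "real set" where
  "resolvent = {\<sigma>. 0 < \<sigma> \<and> (\<exists>P K \<theta>. dichotomy \<sigma> P K \<theta>)}"

definition stable_dim :: "real \<Rightarrow> nat" where
  "stable_dim \<sigma> = dim (stable_space \<sigma> 0)"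

lemma stable_dim_le: "stable_dim \<sigma> \<le> CARD('n)"
  unfolding stable_dim_def by (rule dim_subset_UNIV_cart)

lemma stable_dim_mono:
  assumes "\<sigma>1 \<in> resolvent" "\<sigma>1 \<le> \<sigma>2"
  shows "stable_dim \<sigma>1 \<le> stable_dim \<sigma>2"
  using stable_space_mono[of \<sigma>1 \<sigma>2 0] assms unfolding stable_dim_def resolvent_def by (simp add: dim_subset)

lemma resolvent_between:
  assumes "\<sigma>1 \<in> resolvent" "\<sigma>2 \<in> resolvent" "\<sigma>1 \<le> \<sigma>" "\<sigma> \<le> \<sigma>2" "stable_dim \<sigma>1 = stable_dim \<sigma>2"
  shows "\<sigma> \<in> resolvent"
proof -
  obtain P1 K1 \<theta>1 where dich1: "dichotomy \<sigma>1 P1 K1 \<theta>1" and "0 < \<sigma>1"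
    using assms(1) resolvent_def by auto
  obtain P2 K2 \<theta>2 where dich2: "dichotomy \<sigma>2 P2 K2 \<theta>2" and "0 < \<sigma>2"
    using assms(2) resolvent_def by auto
  have "stable_space \<sigma>1 0 = stable_space \<sigma>2 0"
  proof (rule subspace_dim_equal)
    show "subspace (stable_space \<sigma>1 0)" "subspace (stable_space \<sigma>2 0)"
      using stable_space_eq_fixed_space[OF dich1 \<open>0 < \<sigma>1\<close>] stable_space_eq_fixed_space[OF dich2 \<open>0 < \<sigma>2\<close>]
      by (simp_all add: subspace_fixed_space)
    show "stable_space \<sigma>1 0 \<subseteq> stable_space \<sigma>2 0" using stable_space_mono \<open>0 < \<sigma>1\<close> assms by auto
    show "dim (stable_space \<sigma>2 0) \<le> dim (stable_space \<sigma>1 0)" using assms(5) stable_dim_def by simp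
  qed
  then have "fixed_space (P1 0) = fixed_space (P2 0)"
    using stable_space_eq_fixed_space[OF dich1 \<open>0 < \<sigma>1\<close>] stable_space_eq_fixed_space[OF dich2 \<open>0 < \<sigma>2\<close>]
    by simp
  then have "fixed_space (P1 n) = fixed_space (P2 n)" for n
    by (simp only: fixed_space_eq_image[OF dich1, of n] fixed_space_eq_image[OF dich2, of n])
  then have "dichotomy \<sigma> P2 ((K1 + 1) * K2) (max \<theta>1 \<theta>2)"
    using dichotomy_between[OF dich1 dich2 \<open>0 < \<sigma>1\<close>] assms by simp
  then show ?thesis using \<open>0 < \<sigma>1\<close> assms unfolding resolvent_def by auto
qed

lemma resolvent_locally_const:
  assumes "\<sigma> \<in> resolvent"
  shows "\<exists>lo hi. lo < \<sigma> \<and> \<sigma> < hi \<and> (\<forall>u. lo < u \<and> u < hi \<longrightarrow> u \<in> resolvent \<and> stable_dim u = stable_dim \<sigma>)"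
proof -
  obtain P K \<theta> where dich: "dichotomy \<sigma> P K \<theta>" and "0 < \<sigma>" using assms resolvent_def by auto
  have \<theta>: "0 < \<theta>" "\<theta> < 1" using dichotomyD[OF dich] by auto
  show ?thesis
  proof (intro exI conjI allI impI)
    show "\<sigma> * \<theta> < \<sigma>" "\<sigma> < \<sigma> / \<theta>" using \<open>0 < \<sigma>\<close> \<theta> by (auto simp: field_simps)
    fix u assume u: "\<sigma> * \<theta> < u \<and> u < \<sigma> / \<theta>"
    then have "0 < u" using \<open>0 < \<sigma>\<close> \<theta> by (smt (verit) mult_pos_pos)
    have dich': "dichotomy u P K (max (\<sigma> * \<theta> / u) (\<theta> * u / \<sigma>))"
      using dichotomy_nearby[OF dich \<open>0 < \<sigma>\<close>] u by auto
    then show "u \<in> resolvent" using \<open>0 < u\<close> resolvent_def by auto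
    show "stable_dim u = stable_dim \<sigma>"
      unfolding stable_dim_def
      using stable_space_eq_fixed_space[OF dich' \<open>0 < u\<close>] stable_space_eq_fixed_space[OF dich \<open>0 < \<sigma>\<close>]
      by simp
  qed
qed

lemma resolvent_small: "0 < \<sigma> \<Longrightarrow> \<sigma> \<le> 1 / (2 * g) \<Longrightarrow> \<sigma> \<in> resolvent \<and> stable_dim \<sigma> = 0"
  using dichotomy_zero stable_space_eq_fixed_space[OF dichotomy_zero]
  by (auto simp: resolvent_def stable_dim_def fixed_space_def)

lemma resolvent_large: "2 * g \<le> \<sigma> \<Longrightarrow> \<sigma> \<in> resolvent \<and> stable_dim \<sigma> = CARD('n)"
  using dichotomy_id stable_space_eq_fixed_space[OF dichotomy_id] g_ge_1
  by (auto simp: resolvent_def stable_dim_def fixed_space_def)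

lemma M_scaled_cocycle:
  assumes "0 < \<sigma>" "n \<le> m"
  shows "M m ((cocycle (\<lambda>k. (1/\<sigma>) *\<^sub>R B k) m n ** P) *v x) = (1/\<sigma>)^(m - n) * M m ((cocycle B m n ** P) *v x)"
    and "M n ((cocycle (\<lambda>k. (1/\<sigma>) *\<^sub>R B k) n m ** P) *v x) = \<sigma>^(m - n) * M n ((cocycle B n m ** P) *v x)"
  using cocycle_scaleR_const[OF invertible_B, of "1/\<sigma>" n m] assms
  by (simp_all add: matrix_scaleR_left scaleR_matrix_vector_assoc[symmetric] M_scaleR)

lemma scaled_invariance_iff:
  "0 < \<sigma> \<Longrightarrow> ((1/\<sigma>) *\<^sub>R B n) ** P n = P (n + 1) ** ((1/\<sigma>) *\<^sub>R B n) \<longleftrightarrow> B n ** P n = P (Suc n) ** B n"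
  by (simp add: matrix_scaleR_left matrix_scaleR_right)

lemma dichotomy_if_strong_exp_dich:
  assumes "0 < \<sigma>" and "strong_exp_dich (\<lambda>n. (1/\<sigma>) *\<^sub>R B n) M"
  shows "\<exists>P K \<theta>. dichotomy \<sigma> P K \<theta>"
proof -
  let ?D = "\<lambda>n. (1/\<sigma>) *\<^sub>R B n"
  obtain K a lam P where "0 < K" "0 < lam"
    and P: "\<forall>n. P n ** P n = P n \<and> ?D n ** P n = P (n+1) ** ?D n"
    and bounds: "\<forall>m n x. n \<le> m \<longrightarrow>
       M m ((cocycle ?D m n ** P n) *v x) \<le> K * exp (-lam * (real m - real n)) * M n x \<and>
       M n ((cocycle ?D n m ** (mat 1 - P m)) *v x) \<le> K * exp (-lam * (real m - real n)) * M m x"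
    using assms(2) unfolding strong_exp_dich_def by blast
  have "dichotomy \<sigma> P K (exp (-lam))" unfolding dichotomy_def
  proof (intro conjI allI impI)
    fix m n x assume "n \<le> (m::nat)"
    have rate: "exp (-lam * (real m - real n)) = exp (-lam)^(m - n)"
      using exp_mult_diff_eq_power[OF \<open>n \<le> m\<close>, of "-lam"] by simp
    from bounds[rule_format, OF \<open>n \<le> m\<close>, of x]
    have "M m ((cocycle ?D m n ** P n) *v x) \<le> K * exp (-lam)^(m - n) * M n x \<and>
        M n ((cocycle ?D n m ** (mat 1 - P m)) *v x) \<le> K * exp (-lam)^(m - n) * M m x"
      by (simp only: rate)
    then have "(1/\<sigma>)^(m - n) * M m ((cocycle B m n ** P n) *v x) \<le> K * exp (-lam)^(m - n) * M n x"
      and "\<sigma>^(m - n) * M n ((cocycle B n m ** (mat 1 - P m)) *v x) \<le> K * exp (-lam)^(m - n) * M m x"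
      unfolding M_scaled_cocycle[OF \<open>0 < \<sigma>\<close> \<open>n \<le> m\<close>] by blast+
    then show "M m ((cocycle B m n ** P n) *v x) \<le> K * (\<sigma> * exp (-lam))^(m - n) * M n x"
      and "M n ((cocycle B n m ** (mat 1 - P m)) *v x) \<le> K * (exp (-lam) / \<sigma>)^(m - n) * M m x"
      using \<open>0 < \<sigma>\<close> by (simp_all add: power_mult_distrib power_one_over power_divide field_simps)
  qed (use \<open>0 < K\<close> \<open>0 < lam\<close> P scaled_invariance_iff[OF \<open>0 < \<sigma>\<close>] in auto)
  then show ?thesis by blast
qed

lemma dichotomy_scaled_bounds:
  assumes dich: "dichotomy \<sigma> P K \<theta>" and "0 < \<sigma>" "n \<le> m"
  shows "M m ((cocycle (\<lambda>k. (1/\<sigma>) *\<^sub>R B k) m n ** P n) *v x) \<le> K * \<theta>^(m - n) * M n x"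
    and "M n ((cocycle (\<lambda>k. (1/\<sigma>) *\<^sub>R B k) n m ** (mat 1 - P m)) *v x) \<le> K * \<theta>^(m - n) * M m x"
proof -
  note D = dichotomyD[OF dich] and scaled = M_scaled_cocycle[OF \<open>0 < \<sigma>\<close> \<open>n \<le> m\<close>]
  have "(1/\<sigma>)^(m - n) * M m ((cocycle B m n ** P n) *v x) \<le> (1/\<sigma>)^(m - n) * (K * (\<sigma> * \<theta>)^(m - n) * M n x)"
    using D(6)[OF \<open>n \<le> m\<close>] \<open>0 < \<sigma>\<close> by (intro mult_left_mono) auto
  then show "M m ((cocycle (\<lambda>k. (1/\<sigma>) *\<^sub>R B k) m n ** P n) *v x) \<le> K * \<theta>^(m - n) * M n x"
    unfolding scaled using \<open>0 < \<sigma>\<close> by (simp add: power_mult_distrib power_one_over field_simps)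
  have "\<sigma>^(m - n) * M n ((cocycle B n m ** (mat 1 - P m)) *v x) \<le> \<sigma>^(m - n) * (K * (\<theta> / \<sigma>)^(m - n) * M m x)"
    using D(7)[OF \<open>n \<le> m\<close>] \<open>0 < \<sigma>\<close> by (intro mult_left_mono) auto
  then show "M n ((cocycle (\<lambda>k. (1/\<sigma>) *\<^sub>R B k) n m ** (mat 1 - P m)) *v x) \<le> K * \<theta>^(m - n) * M m x"
    unfolding scaled using \<open>0 < \<sigma>\<close> by (simp add: power_divide field_simps)
qed

lemma scaled_cocycle_growth:
  assumes "0 < \<sigma>" "n \<le> m" "g / \<sigma> \<le> c" "g * \<sigma> \<le> c"
  shows "M m (cocycle (\<lambda>k. (1/\<sigma>) *\<^sub>R B k) m n *v x) \<le> K0 * c^(m - n) * M n x"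
    and "M n (cocycle (\<lambda>k. (1/\<sigma>) *\<^sub>R B k) n m *v x) \<le> K0 * c^(m - n) * M m x"
proof -
  note scaled = M_scaled_cocycle[OF \<open>0 < \<sigma>\<close> \<open>n \<le> m\<close>, where P = "mat 1", simplified]
  have "M m (cocycle (\<lambda>k. (1/\<sigma>) *\<^sub>R B k) m n *v x) \<le> (1/\<sigma>)^(m - n) * (K0 * g^(m - n) * M n x)"
    unfolding scaled using growth[OF \<open>n \<le> m\<close>] \<open>0 < \<sigma>\<close> by (intro mult_left_mono) auto
  also have "\<dots> = K0 * (g / \<sigma>)^(m - n) * M n x" by (simp add: power_divide field_simps)
  also have "\<dots> \<le> K0 * c^(m - n) * M n x"
    using assms M_nonneg g_ge_1 K0_pos by (intro mult_right_mono mult_left_mono power_mono) auto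
  finally show "M m (cocycle (\<lambda>k. (1/\<sigma>) *\<^sub>R B k) m n *v x) \<le> K0 * c^(m - n) * M n x" .
  have "M n (cocycle (\<lambda>k. (1/\<sigma>) *\<^sub>R B k) n m *v x) \<le> \<sigma>^(m - n) * (K0 * g^(m - n) * M m x)"
    unfolding scaled using growth[OF \<open>n \<le> m\<close>] \<open>0 < \<sigma>\<close> by (intro mult_left_mono) auto
  also have "\<dots> = K0 * (g * \<sigma>)^(m - n) * M m x" by (simp add: power_mult_distrib)
  also have "\<dots> \<le> K0 * c^(m - n) * M m x"
    using assms M_nonneg g_ge_1 K0_pos by (intro mult_right_mono mult_left_mono power_mono) auto
  finally show "M n (cocycle (\<lambda>k. (1/\<sigma>) *\<^sub>R B k) n m *v x) \<le> K0 * c^(m - n) * M m x" .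
qed

lemma strong_exp_dich_if_dichotomy:
  assumes "0 < \<sigma>" and dich: "dichotomy \<sigma> P K \<theta>"
  shows "strong_exp_dich (\<lambda>n. (1/\<sigma>) *\<^sub>R B n) M"
proof -
  let ?D = "\<lambda>n. (1/\<sigma>) *\<^sub>R B n"
  note D = dichotomyD[OF dich]
  define lam where "lam = - ln \<theta>"
  define a where "a = max lam (max (ln (g / \<sigma>)) (ln (g * \<sigma>)))"
  have "0 < lam" "exp (-lam) = \<theta>" using D(2,3) by (simp_all add: lam_def)
  have "exp (ln (g / \<sigma>)) \<le> exp a" "exp (ln (g * \<sigma>)) \<le> exp a" by (simp_all add: a_def)
  then have ea: "g / \<sigma> \<le> exp a" "g * \<sigma> \<le> exp a" using g_ge_1 \<open>0 < \<sigma>\<close> by simp_all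
  have widen: "c * p * M k y \<le> max K K0 * p * M k y" if "c \<le> max K K0" "0 \<le> p" for c p k y
    using that M_nonneg by (intro mult_right_mono) auto
  show ?thesis unfolding strong_exp_dich_def
  proof (intro exI conjI allI impI)
    fix m n x assume "n \<le> (m::nat)"
    have rates: "exp (-lam * (real m - real n)) = \<theta>^(m - n)" "exp (a * (real m - real n)) = exp a^(m - n)"
      using exp_mult_diff_eq_power[OF \<open>n \<le> m\<close>, of "-lam"] exp_mult_diff_eq_power[OF \<open>n \<le> m\<close>, of a]
        \<open>exp (-lam) = \<theta>\<close> by simp_all
    have "0 \<le> \<theta>^(m - n)" "0 \<le> exp a^(m - n)" using D(2) by simp_all
    note widen_K = widen[OF max.cobounded1 \<open>0 \<le> \<theta>^(m - n)\<close>]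
      and widen_K0 = widen[OF max.cobounded2 \<open>0 \<le> exp a^(m - n)\<close>]
    show "M m ((cocycle ?D m n ** P n) *v x) \<le> max K K0 * exp (-lam * (real m - real n)) * M n x"
      and "M n ((cocycle ?D n m ** (mat 1 - P m)) *v x) \<le> max K K0 * exp (-lam * (real m - real n)) * M m x"
      using order_trans[OF dichotomy_scaled_bounds(1)[OF dich \<open>0 < \<sigma>\<close> \<open>n \<le> m\<close>] widen_K]
        order_trans[OF dichotomy_scaled_bounds(2)[OF dich \<open>0 < \<sigma>\<close> \<open>n \<le> m\<close>] widen_K] rates
      by simp_all
    show "M m (cocycle ?D m n *v x) \<le> max K K0 * exp (a * (real m - real n)) * M n x"
      and "M n (cocycle ?D n m *v x) \<le> max K K0 * exp (a * (real m - real n)) * M m x"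
      using order_trans[OF scaled_cocycle_growth(1)[OF \<open>0 < \<sigma>\<close> \<open>n \<le> m\<close> ea] widen_K0]
        order_trans[OF scaled_cocycle_growth(2)[OF \<open>0 < \<sigma>\<close> \<open>n \<le> m\<close> ea] widen_K0] rates
      by simp_all
  qed (use D \<open>0 < lam\<close> scaled_invariance_iff[OF \<open>0 < \<sigma>\<close>] in \<open>auto simp: a_def\<close>)
qed

lemma Sigma_ED_eq_complement_resolvent: "Sigma_ED B M = {\<sigma>. 0 < \<sigma> \<and> \<sigma> \<notin> resolvent}"
proof -
  have "strong_exp_dich (\<lambda>n. (1/\<sigma>) *\<^sub>R B n) M \<longleftrightarrow> (\<exists>P K \<theta>. dichotomy \<sigma> P K \<theta>)" if "0 < \<sigma>" for \<sigma>
    using dichotomy_if_strong_exp_dich strong_exp_dich_if_dichotomy that by blast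
  then show ?thesis unfolding Sigma_ED_def resolvent_def by auto
qed

theorem Sigma_ED_intervals:
  "\<exists>r a b. 1 \<le> r \<and> r \<le> CARD('n) \<and> (\<forall>i\<in>{1..r}. 0 < a i \<and> a i \<le> b i) \<and>
     (\<forall>i. 1 \<le> i \<and> i < r \<longrightarrow> b i < a (i + 1)) \<and> Sigma_ED B M = (\<Union>i\<in>{1..r}. {a i..b i})"
proof -
  interpret spectral_index resolvent stable_dim "CARD('n)"
  proof
    show "1 \<le> CARD('n)" by (simp add: Suc_le_eq)
    show "0 < s" if "s \<in> resolvent" for s using that by (simp add: resolvent_def)
    show "stable_dim s \<le> CARD('n)" for s by (rule stable_dim_le)
    show "stable_dim s \<le> stable_dim s'" if "s \<in> resolvent" "s \<le> s'" for s s'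
      using that by (rule stable_dim_mono)
    show "s \<in> resolvent"
      if "s1 \<in> resolvent" "s2 \<in> resolvent" "s1 \<le> s" "s \<le> s2" "stable_dim s1 = stable_dim s2" for s1 s2 s
      using that by (rule resolvent_between)
    show "\<exists>lo hi. lo < s \<and> s < hi \<and> (\<forall>u. lo < u \<and> u < hi \<longrightarrow> u \<in> resolvent \<and> stable_dim u = stable_dim s)"
      if "s \<in> resolvent" for s
      using that by (rule resolvent_locally_const)
    show "\<exists>e>0. \<forall>s. 0 < s \<and> s \<le> e \<longrightarrow> s \<in> resolvent \<and> stable_dim s = 0"
      using resolvent_small g_ge_1 by (intro exI[of _ "1 / (2 * g)"]) auto
    show "\<exists>L. \<forall>s\<ge>L. s \<in> resolvent \<and> stable_dim s = CARD('n)"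
      using resolvent_large by blast
  qed
  have "Sigma_ED B M = (\<Union>i\<in>{1..gaps}. {gap_lo i..gap_hi i})"
    using Sigma_ED_eq_complement_resolvent complement_res_eq_gaps by simp
  then show ?thesis
    using gaps_pos gaps_le gap_lo_pos gap_lo_le_gap_hi gap_hi_less_gap_lo
    by (intro exI[of _ gaps] exI[of _ gap_lo] exI[of _ gap_hi]) auto
qed

end

section \<open>Polynomial dichotomies and dyadic sampling\<close>

definition poly_growth :: "(nat \<Rightarrow> 'n::finite mat) \<Rightarrow> (nat \<Rightarrow> real^'n \<Rightarrow> real) \<Rightarrow> real \<Rightarrow> real \<Rightarrow> bool" where
  "poly_growth C N K a \<longleftrightarrow> (\<forall>m n x. 1 \<le> n \<longrightarrow> n \<le> m \<longrightarrow>
     N m (cocycle C m n *v x) \<le> K * (real m / real n) powr a * N n x \<and>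
     N n (cocycle C n m *v x) \<le> K * (real m / real n) powr a * N m x)"

lemma dyadic_ratio_powr: "((2::real)^m / 2^n) powr x = exp (x * ln 2 * (real m - real n))"
  by (simp add: powr_def ln_div ln_realpow algebra_simps)

lemma exp_le_dyadic_powr:
  fixes n m i j :: nat
  assumes "2^i \<le> n" "n \<le> m" "m < 2^(j+1)" "0 < lam"
  shows "exp (-lam * (real j - real i)) \<le> exp lam * (real m / real n) powr (-lam / ln 2)"
proof -
  have "0 < n" using assms(1) less_le_trans[of 0 "2^i" n] by simp
  then have "0 < m" using assms(2) by simp
  have "real m < real (2^(j+1))" using assms(3) by (simp only: of_nat_less_iff)
  then have "real m \<le> 2^(j+1)" by simp
  then have "ln (real m) \<le> ln (2^(j+1))" using \<open>0 < m\<close> by (subst ln_le_cancel_iff) auto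
  also have "\<dots> = (real j + 1) * ln 2" by (simp only: ln_realpow) simp
  finally have "ln (real m) \<le> (real j + 1) * ln 2" .
  moreover have "real (2^i) \<le> real n" using assms(1) by (simp only: of_nat_le_iff)
  then have "(2::real)^i \<le> real n" by simp
  then have "ln (2^i) \<le> ln (real n)" using \<open>0 < n\<close> by (subst ln_le_cancel_iff) auto
  then have "real i * ln 2 \<le> ln (real n)" by (simp add: ln_realpow)
  ultimately have "ln (real m / real n) \<le> (real j + 1 - real i) * ln 2"
    using \<open>0 < n\<close> \<open>0 < m\<close> by (simp add: ln_div ln_realpow algebra_simps)
  then have "-lam / ln 2 * ((real j + 1 - real i) * ln 2) \<le> -lam / ln 2 * ln (real m / real n)"
    using \<open>0 < lam\<close> by (intro mult_left_mono_neg) auto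
  then have "exp (lam + -lam / ln 2 * ((real j + 1 - real i) * ln 2)) \<le> exp (lam + -lam / ln 2 * ln (real m / real n))"
    by simp
  moreover have "exp (-lam * (real j - real i)) = exp (lam + -lam / ln 2 * ((real j + 1 - real i) * ln 2))"
    by (simp add: field_simps)
  moreover have "exp (lam + -lam / ln 2 * ln (real m / real n)) = exp lam * (real m / real n) powr (-lam / ln 2)"
    using \<open>0 < n\<close> \<open>0 < m\<close> by (simp add: powr_def mult_exp_exp)
  ultimately show ?thesis by (simp only:)
qed

lemma poly_growth_dyadic_block:
  assumes growth: "poly_growth E N K a" and "0 \<le> K" "0 \<le> a" and norms: "\<forall>n\<ge>1. is_norm (N n)"
    and "2^i \<le> n" "n < 2^(i+1)"
  shows "N n (cocycle E n (2^i) *v v) \<le> K * 2 powr a * N (2^i) v"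
    and "N (2^i) (cocycle E (2^i) n *v v) \<le> K * 2 powr a * N n v"
proof -
  have "real n < real (2^(i+1))" using assms(6) by (simp only: of_nat_less_iff)
  then have "(real n / 2^i) powr a \<le> 2 powr a" using \<open>0 \<le> a\<close> by (intro powr_mono2) (auto simp: field_simps)
  then have ratio: "K * (real n / 2^i) powr a \<le> K * 2 powr a" using \<open>0 \<le> K\<close> by (rule mult_left_mono)
  have "1 \<le> n" using \<open>2^i \<le> n\<close> le_trans[of 1 "2^i" n] by simp
  then have "0 \<le> N n v" "0 \<le> N (2^i) v" using norms unfolding is_norm_def by auto
  moreover have "N n (cocycle E n (2^i) *v v) \<le> K * (real n / 2^i) powr a * N (2^i) v \<and>
      N (2^i) (cocycle E (2^i) n *v v) \<le> K * (real n / 2^i) powr a * N n v"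
    using growth[unfolded poly_growth_def, rule_format, of "2^i" n v] \<open>2^i \<le> n\<close> by simp
  ultimately show "N n (cocycle E n (2^i) *v v) \<le> K * 2 powr a * N (2^i) v"
    and "N (2^i) (cocycle E (2^i) n *v v) \<le> K * 2 powr a * N n v"
    using mult_right_mono[OF ratio] by (meson order_trans)+
qed

lemma poly_growth_dyadic_sandwich:
  assumes growth: "poly_growth E N K a" and "0 \<le> K" "0 \<le> a" and norms: "\<forall>n\<ge>1. is_norm (N n)"
    and "2^i \<le> n" "n < 2^(i+1)" "2^j \<le> m" "m < 2^(j+1)"
    and X: "\<And>y. N (2^j) (X *v y) \<le> c * N (2^i) y" and "0 \<le> c"
  shows "N m ((cocycle E m (2^j) ** X ** cocycle E (2^i) n) *v x) \<le> (K * 2 powr a)^2 * c * N n x"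
proof -
  let ?y = "cocycle E (2^i) n *v x"
  have "N m ((cocycle E m (2^j) ** X ** cocycle E (2^i) n) *v x) = N m (cocycle E m (2^j) *v (X *v ?y))"
    by (simp add: matrix_vector_mul_assoc matrix_mul_assoc)
  also have "\<dots> \<le> K * 2 powr a * N (2^j) (X *v ?y)"
    by (rule poly_growth_dyadic_block(1)[OF growth assms(2-4,7,8)])
  also have "\<dots> \<le> K * 2 powr a * (c * N (2^i) ?y)"
    using X[of ?y] \<open>0 \<le> K\<close> by (intro mult_left_mono) auto
  also have "\<dots> \<le> K * 2 powr a * (c * (K * 2 powr a * N n x))"
    using poly_growth_dyadic_block(2)[OF growth assms(2-6)] \<open>0 \<le> K\<close> \<open>0 \<le> c\<close>
    by (intro mult_left_mono) auto
  finally show ?thesis by (simp add: power2_eq_square mult_ac)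
qed

lemma conjugated_projections:
  fixes E :: "nat \<Rightarrow> real^'n^'n" and Q :: "real^'n^'n"
  assumes E: "\<forall>k\<ge>1. invertible (E k)" and "1 \<le> n"
  defines "P \<equiv> \<lambda>k. cocycle E k 1 ** Q ** cocycle E 1 k"
  shows "Q ** Q = Q \<Longrightarrow> P n ** P n = P n" and "E n ** P n = P (n + 1) ** E n"
    and "1 \<le> p \<Longrightarrow> P n = cocycle E n p ** P p ** cocycle E p n"
proof -
  have comp: "cocycle E a b ** cocycle E b c = cocycle E a c" if "1 \<le> a" "1 \<le> b" "1 \<le> c" for a b c
    using cocycle_comp[OF E] that by blast
  have "P n ** P n = cocycle E n 1 ** Q ** (cocycle E 1 n ** cocycle E n 1) ** Q ** cocycle E 1 n"
    by (simp only: P_def matrix_mul_assoc)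
  also have "\<dots> = cocycle E n 1 ** (Q ** Q) ** cocycle E 1 n"
    using comp[of 1 n 1] \<open>1 \<le> n\<close> by (simp only: cocycle_same matrix_mul_rid matrix_mul_assoc)
  finally show "P n ** P n = P n" if "Q ** Q = Q" using that by (simp add: P_def)
  have "E n ** P n = cocycle E (n + 1) n ** cocycle E n 1 ** Q ** cocycle E 1 n"
    by (simp add: P_def matrix_mul_assoc)
  also have "\<dots> = cocycle E (n + 1) 1 ** Q ** (cocycle E 1 (n + 1) ** cocycle E (n + 1) n)"
    using comp[of "n + 1" n 1] comp[of 1 "n + 1" n] \<open>1 \<le> n\<close> by (simp add: matrix_mul_assoc)
  finally show "E n ** P n = P (n + 1) ** E n" by (simp add: P_def matrix_mul_assoc)
  assume "1 \<le> p"
  have "cocycle E n p ** P p ** cocycle E p n = (cocycle E n p ** cocycle E p 1) ** Q ** (cocycle E 1 p ** cocycle E p n)"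
    by (simp add: P_def matrix_mul_assoc)
  then show "P n = cocycle E n p ** P p ** cocycle E p n"
    using comp \<open>1 \<le> n\<close> \<open>1 \<le> p\<close> by (simp add: P_def)
qed

lemma strong_exp_dich_dyadic_sampling_if_strong_poly_dich:
  fixes E :: "nat \<Rightarrow> real^'n^'n"
  assumes E: "\<forall>k\<ge>1. invertible (E k)" and dich: "strong_poly_dich E N"
  shows "strong_exp_dich (dyadic_sampling E) (\<lambda>k. N (2^k))"
proof -
  obtain K a lam P where "0 < K" "0 < lam" "lam \<le> a"
    and P: "\<forall>n\<ge>1. P n ** P n = P n \<and> E n ** P n = P (n+1) ** E n"
    and bounds: "\<forall>m n x. 1 \<le> n \<longrightarrow> n \<le> m \<longrightarrow>
       N m ((cocycle E m n ** P n) *v x) \<le> K * (real m / real n) powr (-lam) * N n x \<and>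
       N n ((cocycle E n m ** (mat 1 - P m)) *v x) \<le> K * (real m / real n) powr (-lam) * N m x \<and>
       N m (cocycle E m n *v x) \<le> K * (real m / real n) powr a * N n x \<and>
       N n (cocycle E n m *v x) \<le> K * (real m / real n) powr a * N m x"
    using dich unfolding strong_poly_dich_def by blast
  show ?thesis unfolding strong_exp_dich_def
  proof (intro exI conjI allI impI)
    fix n
    show "P (2^n) ** P (2^n) = P (2^n)" using P by simp
    show "dyadic_sampling E n ** P (2^n) = P (2^(n+1)) ** dyadic_sampling E n"
      using cocycle_commute[OF E] P by (simp add: dyadic_sampling_def)
    fix m x assume "n \<le> m"
    then have "1 \<le> (2::nat)^n" "(2::nat)^n \<le> 2^m" by (auto intro: power_increasing)
    note bounds = bounds[rule_format, OF this, of x]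
    show "N (2^m) ((cocycle (dyadic_sampling E) m n ** P (2^n)) *v x)
        \<le> K * exp (-(lam * ln 2) * (real m - real n)) * N (2^n) x"
      and "N (2^n) ((cocycle (dyadic_sampling E) n m ** (mat 1 - P (2^m))) *v x)
        \<le> K * exp (-(lam * ln 2) * (real m - real n)) * N (2^m) x"
      and "N (2^m) (cocycle (dyadic_sampling E) m n *v x) \<le> K * exp (a * ln 2 * (real m - real n)) * N (2^n) x"
      and "N (2^n) (cocycle (dyadic_sampling E) n m *v x) \<le> K * exp (a * ln 2 * (real m - real n)) * N (2^m) x"
      using bounds dyadic_ratio_powr[of m n "-lam"] dyadic_ratio_powr[of m n a]
      by (simp_all add: cocycle_dyadic_sampling[OF E])
  qed (use \<open>0 < K\<close> \<open>0 < lam\<close> \<open>lam \<le> a\<close> in auto)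
qed

lemma dyadic_bracket:
  fixes n m :: nat
  assumes "1 \<le> n" "n \<le> m"
  obtains i j where "2^i \<le> n" "n < 2^(i+1)" "2^j \<le> m" "m < 2^(j+1)" "i \<le> j"
proof -
  obtain i where i: "2^i \<le> n" "n < 2^(i+1)" using ex_power_ivl1[of 2 n] assms by auto
  obtain j where j: "2^j \<le> m" "m < 2^(j+1)" using ex_power_ivl1[of 2 m] assms by auto
  have "i \<le> j"
  proof (rule ccontr)
    assume "\<not> i \<le> j"
    then have "(2::nat)^(j+1) \<le> 2^i" by (intro power_increasing) auto
    then show False using i j \<open>n \<le> m\<close> by simp
  qed
  then show ?thesis using i j that by blast
qed

lemma dyadic_invariant_projection:
  fixes E :: "nat \<Rightarrow> real^'n^'n"
  assumes E: "\<forall>k\<ge>1. invertible (E k)"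
    and P': "\<forall>n. dyadic_sampling E n ** P' n = P' (Suc n) ** dyadic_sampling E n"
    and "1 \<le> k"
  shows "cocycle E k 1 ** P' 0 ** cocycle E 1 k = cocycle E k (2^l) ** P' l ** cocycle E (2^l) k"
proof -
  have "\<forall>k\<ge>0. invertible (dyadic_sampling E k)"
    using invertible_cocycle[OF E] by (simp add: dyadic_sampling_def)
  then have "cocycle E (2^l) 1 ** P' 0 = P' l ** cocycle E (2^l) 1"
    using cocycle_commute[of 0 "dyadic_sampling E" P' l 0] P' by (simp add: cocycle_dyadic_sampling[OF E])
  then have "cocycle E (2^l) 1 ** P' 0 ** cocycle E 1 (2^l) = P' l ** (cocycle E (2^l) 1 ** cocycle E 1 (2^l))"
    by (simp add: matrix_mul_assoc)
  then have "P' l = cocycle E (2^l) 1 ** P' 0 ** cocycle E 1 (2^l)"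
    using cocycle_inverse[OF E, of "2^l" 1] by simp
  then show ?thesis using conjugated_projections(3)[OF E \<open>1 \<le> k\<close>, of "2^l" "P' 0"] by simp
qed

text \<open>The projection at time \<open>n\<close> is transported from time 1, and each estimate between \<open>n \<le> m\<close>
  is routed through the dyadic times \<open>2\<^sup>i \<le> n < 2\<^sup>i\<^sup>+\<^sup>1\<close> and \<open>2\<^sup>j \<le> m < 2\<^sup>j\<^sup>+\<^sup>1\<close>.\<close>

lemma dyadic_dichotomy_extends:
  fixes E :: "nat \<Rightarrow> real^'n^'n"
  assumes E: "\<forall>k\<ge>1. invertible (E k)" and norms: "\<forall>n\<ge>1. is_norm (N n)"
    and growth: "poly_growth E N K0 a0" "0 \<le> K0" "0 \<le> a0" and "0 \<le> K'" "0 < lam"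
    and P': "\<forall>n. dyadic_sampling E n ** P' n = P' (Suc n) ** dyadic_sampling E n"
    and bounds: "\<forall>m n x. n \<le> m \<longrightarrow>
       N (2^m) ((cocycle (dyadic_sampling E) m n ** P' n) *v x) \<le> K' * exp (-lam * (real m - real n)) * N (2^n) x \<and>
       N (2^n) ((cocycle (dyadic_sampling E) n m ** (mat 1 - P' m)) *v x) \<le> K' * exp (-lam * (real m - real n)) * N (2^m) x"
    and "1 \<le> n" "n \<le> m"
  defines "P \<equiv> \<lambda>k. cocycle E k 1 ** P' 0 ** cocycle E 1 k"
    and "K \<equiv> (K0 * 2 powr a0)^2 * (K' * exp lam)"
  shows "N m ((cocycle E m n ** P n) *v x) \<le> K * (real m / real n) powr (-lam / ln 2) * N n x"
    and "N n ((cocycle E n m ** (mat 1 - P m)) *v x) \<le> K * (real m / real n) powr (-lam / ln 2) * N m x"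
proof -
  obtain i j where i: "2^i \<le> n" "n < 2^(i+1)" and j: "2^j \<le> m" "m < 2^(j+1)" and "i \<le> j"
    using dyadic_bracket[OF \<open>1 \<le> n\<close> \<open>n \<le> m\<close>] .
  have comp: "cocycle E a b ** cocycle E b c = cocycle E a c" if "1 \<le> a" "1 \<le> b" "1 \<le> c" for a b c
    using cocycle_comp[OF E] that by blast
  have P_dyadic: "P k = cocycle E k (2^l) ** P' l ** cocycle E (2^l) k" if "1 \<le> k" for k l
    using dyadic_invariant_projection[OF E P' that] by (simp add: P_def)
  let ?c = "K' * exp (-lam * (real j - real i))"
  have "(K0 * 2 powr a0)^2 * ?c \<le> K * (real m / real n) powr (-lam / ln 2)"
    using exp_le_dyadic_powr[OF i(1) \<open>n \<le> m\<close> j(2) \<open>0 < lam\<close>] \<open>0 \<le> K'\<close>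
    by (simp add: K_def mult_left_mono mult.assoc)
  then have rate: "(K0 * 2 powr a0)^2 * ?c * N k x \<le> K * (real m / real n) powr (-lam / ln 2) * N k x"
    if "1 \<le> k" for k
    using that norms by (intro mult_right_mono) (auto simp: is_norm_def)
  have "cocycle E m n ** P n = cocycle E m (2^j) ** (cocycle (dyadic_sampling E) j i ** P' i) ** cocycle E (2^i) n"
    using P_dyadic[OF \<open>1 \<le> n\<close>, of i] comp[of m n "2^i"] comp[of m "2^j" "2^i"] \<open>1 \<le> n\<close> \<open>n \<le> m\<close>
    by (simp add: cocycle_dyadic_sampling[OF E] matrix_mul_assoc)
  moreover have "N m ((cocycle E m (2^j) ** (cocycle (dyadic_sampling E) j i ** P' i) ** cocycle E (2^i) n) *v x)
      \<le> (K0 * 2 powr a0)^2 * ?c * N n x"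
    using bounds \<open>i \<le> j\<close> \<open>0 \<le> K'\<close>
    by (intro poly_growth_dyadic_sandwich[OF growth norms i j]) (simp_all add: matrix_vector_mul_assoc[symmetric])
  ultimately show "N m ((cocycle E m n ** P n) *v x) \<le> K * (real m / real n) powr (-lam / ln 2) * N n x"
    using rate[OF \<open>1 \<le> n\<close>] by simp
  have "mat 1 - P m = cocycle E m (2^j) ** (mat 1 - P' j) ** cocycle E (2^j) m"
    using P_dyadic[of m j] cocycle_inverse[OF E, of m "2^j"] \<open>1 \<le> n\<close> \<open>n \<le> m\<close>
    by (simp add: matrix_diff_ldistrib matrix_diff_rdistrib matrix_mul_assoc)
  then have "cocycle E n m ** (mat 1 - P m)
      = cocycle E n (2^i) ** (cocycle (dyadic_sampling E) i j ** (mat 1 - P' j)) ** cocycle E (2^j) m"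
    using comp[of n m "2^j"] comp[of n "2^i" "2^j"] \<open>1 \<le> n\<close> \<open>n \<le> m\<close>
    by (simp add: cocycle_dyadic_sampling[OF E] matrix_mul_assoc)
  moreover have "N n ((cocycle E n (2^i) ** (cocycle (dyadic_sampling E) i j ** (mat 1 - P' j)) ** cocycle E (2^j) m) *v x)
      \<le> (K0 * 2 powr a0)^2 * ?c * N m x"
    using bounds \<open>i \<le> j\<close> \<open>0 \<le> K'\<close>
    by (intro poly_growth_dyadic_sandwich[OF growth norms j i]) (simp_all add: matrix_vector_mul_assoc[symmetric])
  ultimately show "N n ((cocycle E n m ** (mat 1 - P m)) *v x) \<le> K * (real m / real n) powr (-lam / ln 2) * N m x"
    using rate[of m] \<open>1 \<le> n\<close> \<open>n \<le> m\<close> by simp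
qed

lemma poly_growth_mono:
  assumes "poly_growth E N K a" "0 \<le> K" "K \<le> K'" "a \<le> a'" and norms: "\<forall>n\<ge>1. is_norm (N n)"
  shows "poly_growth E N K' a'"
  unfolding poly_growth_def
proof (intro allI impI)
  fix m n x assume "1 \<le> n" "n \<le> (m::nat)"
  then have "K * (real m / real n) powr a \<le> K' * (real m / real n) powr a'"
    using assms(2-4) by (intro mult_mono powr_mono) auto
  then have "K * (real m / real n) powr a * N k y \<le> K' * (real m / real n) powr a' * N k y" if "1 \<le> k" for k y
    using that norms by (intro mult_right_mono) (auto simp: is_norm_def)
  then show "N m (cocycle E m n *v x) \<le> K' * (real m / real n) powr a' * N n x \<and>
      N n (cocycle E n m *v x) \<le> K' * (real m / real n) powr a' * N m x"
    using assms(1) \<open>1 \<le> n\<close> \<open>n \<le> m\<close> unfolding poly_growth_def by (meson order_trans le_trans)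
qed

lemma strong_poly_dich_if_strong_exp_dich_dyadic_sampling:
  fixes E :: "nat \<Rightarrow> real^'n^'n"
  assumes E: "\<forall>k\<ge>1. invertible (E k)" and norms: "\<forall>n\<ge>1. is_norm (N n)"
    and growth: "poly_growth E N K0 a0" "0 < K0" "0 \<le> a0"
    and dich: "strong_exp_dich (dyadic_sampling E) (\<lambda>k. N (2^k))"
  shows "strong_poly_dich E N"
proof -
  obtain K' a' lam P' where "0 < K'" "0 < lam"
    and P': "\<forall>n. P' n ** P' n = P' n \<and> dyadic_sampling E n ** P' n = P' (n+1) ** dyadic_sampling E n"
    and bounds: "\<forall>m n x. n \<le> m \<longrightarrow>
       N (2^m) ((cocycle (dyadic_sampling E) m n ** P' n) *v x) \<le> K' * exp (-lam * (real m - real n)) * N (2^n) x \<and>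
       N (2^n) ((cocycle (dyadic_sampling E) n m ** (mat 1 - P' m)) *v x) \<le> K' * exp (-lam * (real m - real n)) * N (2^m) x"
    using dich unfolding strong_exp_dich_def by blast
  define K where "K = (K0 * 2 powr a0)^2 * (K' * exp lam)"
  have P'_inv: "\<forall>n. dyadic_sampling E n ** P' n = P' (Suc n) ** dyadic_sampling E n" using P' by simp
  have "poly_growth E N (max K K0) (max a0 (lam / ln 2))"
    using growth by (intro poly_growth_mono[OF growth(1) _ _ _ norms]) auto
  show ?thesis unfolding strong_poly_dich_def
  proof (intro exI conjI allI impI)
    show "0 < max K K0" "0 < lam / ln 2" "lam / ln 2 \<le> max a0 (lam / ln 2)"
      using growth(2) \<open>0 < lam\<close> by auto
  next
    fix n :: nat assume "1 \<le> n"
    show "cocycle E n 1 ** P' 0 ** cocycle E 1 n ** (cocycle E n 1 ** P' 0 ** cocycle E 1 n)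
        = cocycle E n 1 ** P' 0 ** cocycle E 1 n"
      and "E n ** (cocycle E n 1 ** P' 0 ** cocycle E 1 n) = cocycle E (n + 1) 1 ** P' 0 ** cocycle E 1 (n + 1) ** E n"
      using conjugated_projections(1,2)[OF E \<open>1 \<le> n\<close>, of "P' 0"] P' by simp_all
  next
    fix m n :: nat and x assume "1 \<le> n" "n \<le> m"
    note extend = dyadic_dichotomy_extends[OF E norms growth(1) less_imp_le[OF growth(2)] growth(3)
        less_imp_le[OF \<open>0 < K'\<close>] \<open>0 < lam\<close> P'_inv bounds \<open>1 \<le> n\<close> \<open>n \<le> m\<close>, folded K_def]
    have widen: "K * p * N k x \<le> max K K0 * p * N k x" if "0 \<le> p" "1 \<le> k" for p k
      using that norms by (intro mult_right_mono) (auto simp: is_norm_def)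
    show "N m ((cocycle E m n ** (cocycle E n 1 ** P' 0 ** cocycle E 1 n)) *v x)
        \<le> max K K0 * (real m / real n) powr - (lam / ln 2) * N n x"
      and "N n ((cocycle E n m ** (mat 1 - cocycle E m 1 ** P' 0 ** cocycle E 1 m)) *v x)
        \<le> max K K0 * (real m / real n) powr - (lam / ln 2) * N m x"
      using order_trans[OF extend(1) widen[OF powr_ge_zero \<open>1 \<le> n\<close>]]
        order_trans[OF extend(2) widen[OF powr_ge_zero]] \<open>1 \<le> n\<close> \<open>n \<le> m\<close> by simp_all
    show "N m (cocycle E m n *v x) \<le> max K K0 * (real m / real n) powr max a0 (lam / ln 2) * N n x"
      and "N n (cocycle E n m *v x) \<le> max K K0 * (real m / real n) powr max a0 (lam / ln 2) * N m x"
      using \<open>poly_growth E N (max K K0) (max a0 (lam / ln 2))\<close> \<open>1 \<le> n\<close> \<open>n \<le> m\<close>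
      unfolding poly_growth_def by blast+
  qed
qed

section \<open>Rescaling\<close>

lemma cocycle_ratio_scaleR:
  fixes A :: "nat \<Rightarrow> real^'n^'n"
  assumes A: "\<forall>k\<ge>1. invertible (A k)" and "1 \<le> m" "1 \<le> n"
  shows "cocycle (\<lambda>n. ((real n + 1) / real n) powr (-t) *\<^sub>R A n) m n = (real m / real n) powr (-t) *\<^sub>R cocycle A m n"
proof -
  have "(\<lambda>n. ((real n + 1) / real n) powr (-t) *\<^sub>R A n) = (\<lambda>k. (real (Suc k) powr (-t) / real k powr (-t)) *\<^sub>R A k)"
    by (simp add: powr_divide add.commute)
  then show ?thesis
    using cocycle_scaleR[OF A _ assms(2,3), of "\<lambda>k. real k powr (-t)"] by (simp add: powr_divide)
qed

lemma poly_growth_scaleR: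
  fixes A :: "nat \<Rightarrow> real^'n^'n"
  assumes A: "\<forall>k\<ge>1. invertible (A k)" and norms: "\<forall>n\<ge>1. is_norm (N n)"
    and growth: "poly_growth A N K a" and "0 \<le> K"
  shows "poly_growth (\<lambda>n. ((real n + 1) / real n) powr (-t) *\<^sub>R A n) N K (a + \<bar>t\<bar>)"
  unfolding poly_growth_def
proof (intro allI impI conjI)
  fix m n x assume "1 \<le> n" "n \<le> (m::nat)"
  let ?E = "\<lambda>n. ((real n + 1) / real n) powr (-t) *\<^sub>R A n" and ?r = "real m / real n"
  have "1 \<le> ?r" using \<open>1 \<le> n\<close> \<open>n \<le> m\<close> by simp
  have N: "N k (c *\<^sub>R y) = \<bar>c\<bar> * N k y" "0 \<le> N k y" if "1 \<le> k" for k c y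
    using norms that unfolding is_norm_def by auto
  have bound: "?r powr s * (K * ?r powr a * N k y) \<le> K * ?r powr (a + \<bar>t\<bar>) * N k y"
    if "\<bar>s\<bar> = \<bar>t\<bar>" "1 \<le> k" for s k y
  proof -
    have "?r powr s * ?r powr a \<le> ?r powr (a + \<bar>t\<bar>)"
      using \<open>1 \<le> ?r\<close> that by (simp add: powr_add[symmetric] powr_mono)
    then have "K * (?r powr s * ?r powr a) * N k y \<le> K * ?r powr (a + \<bar>t\<bar>) * N k y"
      using \<open>0 \<le> K\<close> N(2)[OF \<open>1 \<le> k\<close>] by (intro mult_right_mono mult_left_mono) auto
    then show ?thesis by (simp add: mult_ac)
  qed
  have gr: "N m (cocycle A m n *v x) \<le> K * ?r powr a * N n x" "N n (cocycle A n m *v x) \<le> K * ?r powr a * N m x"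
    using growth \<open>1 \<le> n\<close> \<open>n \<le> m\<close> unfolding poly_growth_def by auto
  have "N m (cocycle ?E m n *v x) = ?r powr (-t) * N m (cocycle A m n *v x)"
    using cocycle_ratio_scaleR[OF A, of m n] \<open>1 \<le> n\<close> \<open>n \<le> m\<close>
    by (simp add: scaleR_matrix_vector_assoc[symmetric] N(1))
  also have "\<dots> \<le> ?r powr (-t) * (K * ?r powr a * N n x)" using gr(1) by (intro mult_left_mono) auto
  also have "\<dots> \<le> K * ?r powr (a + \<bar>t\<bar>) * N n x" using bound[of "-t" n x] \<open>1 \<le> n\<close> by simp
  finally show "N m (cocycle ?E m n *v x) \<le> K * ?r powr (a + \<bar>t\<bar>) * N n x" .
  have "(real n / real m) powr (-t) = ?r powr t"
    using \<open>1 \<le> n\<close> \<open>n \<le> m\<close> by (simp add: powr_divide powr_minus_divide)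
  then have "N n (cocycle ?E n m *v x) = ?r powr t * N n (cocycle A n m *v x)"
    using cocycle_ratio_scaleR[OF A, of n m] \<open>1 \<le> n\<close> \<open>n \<le> m\<close>
    by (simp add: scaleR_matrix_vector_assoc[symmetric] N(1))
  also have "\<dots> \<le> ?r powr t * (K * ?r powr a * N m x)" using gr(2) by (intro mult_left_mono) auto
  also have "\<dots> \<le> K * ?r powr (a + \<bar>t\<bar>) * N m x" using bound[of t m x] \<open>1 \<le> n\<close> \<open>n \<le> m\<close> by simp
  finally show "N n (cocycle ?E n m *v x) \<le> K * ?r powr (a + \<bar>t\<bar>) * N m x" .
qed

lemma Sigma_PD_iff_Sigma_ED_dyadic_sampling:
  fixes A :: "nat \<Rightarrow> real^'n^'n"
  assumes A: "\<forall>k\<ge>1. invertible (A k)" and norms: "\<forall>n\<ge>1. is_norm (N n)"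
    and growth: "poly_growth A N K a" "0 < K" "0 \<le> a"
  shows "t \<in> Sigma_PD A N \<longleftrightarrow> 2 powr t \<in> Sigma_ED (dyadic_sampling A) (\<lambda>n. N (2^n))"
proof -
  let ?E = "\<lambda>n. ((real n + 1) / real n) powr (-t) *\<^sub>R A n"
  have E: "\<forall>k\<ge>1. invertible (?E k)" using A by (auto intro!: scalar_invertible)
  have "poly_growth ?E N K (a + \<bar>t\<bar>)"
    using poly_growth_scaleR[OF A norms growth(1)] growth(2) by simp
  then have "strong_poly_dich ?E N \<longleftrightarrow> strong_exp_dich (dyadic_sampling ?E) (\<lambda>k. N (2^k))"
    using strong_exp_dich_dyadic_sampling_if_strong_poly_dich[OF E]
      strong_poly_dich_if_strong_exp_dich_dyadic_sampling[OF E norms _ growth(2)] growth(3)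
    by auto
  moreover have "dyadic_sampling ?E = (\<lambda>k. (1 / 2 powr t) *\<^sub>R dyadic_sampling A k)"
  proof
    fix k
    show "dyadic_sampling ?E k = (1 / 2 powr t) *\<^sub>R dyadic_sampling A k"
      using cocycle_ratio_scaleR[OF A, of "2^(k+1)" "2^k" t] by (simp add: dyadic_sampling_def powr_minus_divide)
  qed
  ultimately show ?thesis by (simp add: Sigma_PD_def Sigma_ED_def)
qed

lemma bounded_growth_cocycle_dyadic_sampling:
  fixes A :: "nat \<Rightarrow> real^'n^'n"
  assumes A: "\<forall>k\<ge>1. invertible (A k)" and norms: "\<forall>n\<ge>1. is_norm (N n)"
    and growth: "poly_growth A N K a" "0 < K" "0 \<le> a"
  shows "bounded_growth_cocycle (dyadic_sampling A) (\<lambda>n. N (2^n)) K (2 powr a)"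
proof
  show "\<forall>k\<ge>0. invertible (dyadic_sampling A k)"
    using invertible_cocycle[OF A] by (simp add: dyadic_sampling_def)
  show "\<forall>n. is_norm (N (2^n))" using norms by simp
  show "0 < K" "1 \<le> 2 powr a" using growth(2,3) by (simp_all add: ge_one_powr_ge_zero)
  fix m n :: nat and x assume "n \<le> m"
  then have "1 \<le> (2::nat)^n" "(2::nat)^n \<le> 2^m" by (auto intro: power_increasing)
  moreover have "(real ((2::nat)^m) / real ((2::nat)^n)) powr a = (2 powr a)^(m - n)"
    using dyadic_ratio_powr[of m n a] exp_mult_diff_eq_power[OF \<open>n \<le> m\<close>, of "a * ln 2"]
    by (simp add: powr_def)
  ultimately show "N (2^m) (cocycle (dyadic_sampling A) m n *v x) \<le> K * (2 powr a)^(m - n) * N (2^n) x \<and>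
      N (2^n) (cocycle (dyadic_sampling A) n m *v x) \<le> K * (2 powr a)^(m - n) * N (2^m) x"
    using growth(1)[unfolded poly_growth_def, rule_format, of "2^n" "2^m" x]
    by (simp add: cocycle_dyadic_sampling[OF A])
qed

lemma two_powr_mem_Icc_iff:
  "0 < \<alpha> \<Longrightarrow> 0 < \<beta> \<Longrightarrow> 2 powr t \<in> {\<alpha>..\<beta>} \<longleftrightarrow> t \<in> {log 2 \<alpha>..log 2 \<beta>}"
  by (simp add: log_le_iff le_log_iff)

theorem corollary2p2:
  fixes A :: "nat \<Rightarrow> real ^ 'n ^ 'n" and N :: "nat \<Rightarrow> real ^ 'n \<Rightarrow> real"
  assumes inv: "\<forall>n\<ge>1. invertible (A n)"
    and norms: "\<forall>n\<ge>1. is_norm (N n)"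
    and growth: "\<exists>K a. K > 0 \<and> a > 0 \<and>
      (\<forall>m n x. 1 \<le> n \<longrightarrow> n \<le> m \<longrightarrow>
         N m (cocycle A m n *v x) \<le> K * (real m / real n) powr a * N n x \<and>
         N n (cocycle A n m *v x) \<le> K * (real m / real n) powr a * N m x)"
  shows "\<exists>r (a::nat \<Rightarrow> real) b. 1 \<le> r \<and> r \<le> CARD('n) \<and>
      (\<forall>i\<in>{1..r}. a i \<le> b i) \<and> (\<forall>i. 1 \<le> i \<and> i < r \<longrightarrow> b i < a (i+1)) \<and>
      Sigma_ED (\<lambda>n. cocycle A (2^(n+1)) (2^n)) (\<lambda>n. N (2^n)) = (\<Union>i\<in>{1..r}. {a i..b i}) \<and>
      Sigma_PD A N = (\<Union>i\<in>{1..r}. {ln (a i) / ln 2..ln (b i) / ln 2})"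
proof -
  obtain K a where "0 < K" "0 < a" and poly: "poly_growth A N K a"
    using growth unfolding poly_growth_def by blast
  interpret bounded_growth_cocycle "dyadic_sampling A" "\<lambda>n. N (2^n)" K "2 powr a"
    using bounded_growth_cocycle_dyadic_sampling[OF inv norms poly \<open>0 < K\<close>] \<open>0 < a\<close> by simp
  obtain r \<alpha> \<beta> where r: "1 \<le> r" "r \<le> CARD('n)" and \<alpha>\<beta>: "\<forall>i\<in>{1..r}. 0 < \<alpha> i \<and> \<alpha> i \<le> \<beta> i"
    and gaps: "\<forall>i. 1 \<le> i \<and> i < r \<longrightarrow> \<beta> i < \<alpha> (i + 1)"
    and ED: "Sigma_ED (dyadic_sampling A) (\<lambda>n. N (2^n)) = (\<Union>i\<in>{1..r}. {\<alpha> i..\<beta> i})"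
    using Sigma_ED_intervals by blast
  have "2 powr t \<in> {\<alpha> i..\<beta> i} \<longleftrightarrow> t \<in> {log 2 (\<alpha> i)..log 2 (\<beta> i)}" if "i \<in> {1..r}" for i t
    using \<alpha>\<beta> that by (intro two_powr_mem_Icc_iff) force+
  then have "t \<in> Sigma_PD A N \<longleftrightarrow> t \<in> (\<Union>i\<in>{1..r}. {log 2 (\<alpha> i)..log 2 (\<beta> i)})" for t
    using Sigma_PD_iff_Sigma_ED_dyadic_sampling[OF inv norms poly \<open>0 < K\<close>] \<open>0 < a\<close> ED by auto
  then have "Sigma_PD A N = (\<Union>i\<in>{1..r}. {log 2 (\<alpha> i)..log 2 (\<beta> i)})" by blast
  moreover have "(\<lambda>n. cocycle A (2^(n+1)) (2^n)) = dyadic_sampling A"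
    by (simp add: fun_eq_iff dyadic_sampling_def)
  ultimately show ?thesis
    using r \<alpha>\<beta> gaps ED unfolding log_def by (intro exI[of _ r] exI[of _ \<alpha>] exI[of _ \<beta>]) auto
qed

end
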